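(* Let $\mathbb{H}$ be a real-valued function on classical channels (between finite alphabets) that is monotone under classical channel majorization ($\mathcal{N}\succ\mathcal{M}\Rightarrow\mathbb{H}(\mathcal{N})\le\mathbb{H}(\mathcal{M})$), additive under tensor products, and equal to the Shannon entropy $H$ on probability vectors (channels with trivial input). Then for every classical channel $\mathcal{N}$ from $X$ ($|X|=m$) to $Y$ with columns $\mathbf{p}_x=\mathcal{N}(\mathbf{e}_x)$, $$\mathbb{H}(Y|X)_{\mathcal{N}}=\underline{H}^{\mathrm{reg}}(Y|X)_{\mathcal{N}}=\overline{H}(Y|X)_{\mathcal{N}}=\min_{x\in[m]}H(\mathbf{p}_x).$$
   Context: $H(\mathbf{p})=-\sum_ip_i\log p_i$. Vector majorization $\mathbf{p}\succ\mathbf{q}$: the sum of the $k$ largest entries of $\mathbf{p}$ is at least that of $\mathbf{q}$ for all $k$ (vectors of different lengths compared after zero-padding). Classical channels are column-stochastic matrices; $\mathcal{N}\otimes\mathcal{M}$ has columns $\mathcal{N}(\mathbf{e}_x)\otimes\mathcal{M}(\mathbf{e}_{x'})$. Classical channel majorization (same output $Y$): $\mathcal{N}\succ\mathcal{M}$ iff $\mathcal{M}=\mathcal{D}^{YZ\to Y}\circ(\mathcal{N}\otimes\mathrm{id}^Z)\circ\mathcal{S}^{X'\to XZ}$ for a finite classical system $Z$ and classical channels $\mathcal{S},\mathcal{D}$ with $\mathcal{D}(\cdot\otimes\mathbf{e}_z)$ doubly stochastic for all $z$; channels with different output sizes are compared after padding the smaller outputs with zeros. For a probability vector $\mathbf{q}$,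 $\mathbf{q}\succ\mathcal{N}$ means $\mathbf{q}\succ\mathbf{p}_x$ for all $x$. Maximal extension: $\overline{H}(Y|X)_{\mathcal{N}}:=\inf\{H(\mathbf{q}):\mathcal{N}\succ\mathbf{q}\}$; minimal extension: $\underline{H}(Y|X)_{\mathcal{N}}:=\sup\{H(\mathbf{q}):\mathbf{q}\succ\mathcal{N}\}$ (over probability vectors of arbitrary finite length); regularized minimal extension: $\underline{H}^{\mathrm{reg}}(Y|X)_{\mathcal{N}}:=\lim_{k\to\infty}\frac1k\underline{H}(Y^k|X^k)_{\mathcal{N}^{\otimes k}}$. *)

theory Defs
  imports Complex_Main
begin

text \<open>A classical channel from an alphabet of size m to an alphabet of size n is
 represented as a triple (m, n, W) where W y x is the probability of output y given
 input x (column-stochastic n x m matrix), with all entries outside the range set to 0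
 (so that zero-padding of outputs is automatic).\<close>

type_synonym chan = "nat \<times> nat \<times> (nat \<Rightarrow> nat \<Rightarrow> real)"

definition is_channel :: "chan \<Rightarrow> bool" where
  "is_channel C = (case C of (m, n, W) \<Rightarrow>
     m \<ge> 1 \<and> (\<forall>x<m. \<forall>y<n. W y x \<ge> 0) \<and> (\<forall>x<m. (\<Sum>y<n. W y x) = 1)
     \<and> (\<forall>x y. (x \<ge> m \<or> y \<ge> n) \<longrightarrow> W y x = 0))"

definition prob_vec :: "nat \<Rightarrow> (nat \<Rightarrow> real) \<Rightarrow> bool" where
  "prob_vec n p = ((\<forall>i<n. p i \<ge> 0) \<and> (\<Sum>i<n. p i) = 1 \<and> (\<forall>i\<ge>n. p i = 0))"

definition entropy :: "nat \<Rightarrow> (nat \<Rightarrow> real) \<Rightarrow> real" where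
  "entropy n p = - (\<Sum>i<n. (if p i = 0 then 0 else p i * log 2 (p i)))"

definition vec_chan :: "nat \<Rightarrow> (nat \<Rightarrow> real) \<Rightarrow> chan" where
  "vec_chan n p = (1, n, (\<lambda>y x. if x = 0 then p y else 0))"

text \<open>Tensor product; index (a,b) is encoded as a * (size of second) + b.\<close>
definition tensor :: "chan \<Rightarrow> chan \<Rightarrow> chan" where
  "tensor C1 C2 = (case C1 of (m1, n1, N1) \<Rightarrow> case C2 of (m2, n2, N2) \<Rightarrow>
     (m1 * m2, n1 * n2, (\<lambda>y x. if y < n1 * n2 \<and> x < m1 * m2
        then N1 (y div n2) (x div m2) * N2 (y mod n2) (x mod m2) else 0)))"

definition triv_chan :: chan where
  "triv_chan = (1, 1, (\<lambda>y x. if y = 0 \<and> x = 0 then 1 else 0))"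

fun tpow :: "chan \<Rightarrow> nat \<Rightarrow> chan" where
  "tpow C 0 = triv_chan"
| "tpow C (Suc k) = tensor C (tpow C k)"

definition topsum :: "nat \<Rightarrow> (nat \<Rightarrow> real) \<Rightarrow> nat \<Rightarrow> real" where
  "topsum n p k = Max ((\<lambda>S. \<Sum>i\<in>S. p i) ` {S. S \<subseteq> {..<n} \<and> card S = k})"

definition vec_maj :: "nat \<Rightarrow> (nat \<Rightarrow> real) \<Rightarrow> nat \<Rightarrow> (nat \<Rightarrow> real) \<Rightarrow> bool" where
  "vec_maj n p n' q = (\<forall>k \<le> max n n'. topsum (max n n') q k \<le> topsum (max n n') p k)"

text \<open>Classical channel majorization N \<succ> M: after padding both outputs to size
  k = max n n', M = D o (N \<otimes> id_Z) o S with |Z| = l, S a channel X' \<rightarrow> X \<times> Z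
  (index x*l+z), and D(\<cdot> \<otimes> e_z) doubly stochastic for every z (index y0*l+z).\<close>
definition chan_maj :: "chan \<Rightarrow> chan \<Rightarrow> bool" where
  "chan_maj C1 C2 = (case C1 of (m, n, N) \<Rightarrow> case C2 of (m', n', M) \<Rightarrow>
     (let k = max n n' in
      \<exists>l::nat. \<exists>S D :: nat \<Rightarrow> nat \<Rightarrow> real. l \<ge> 1 \<and>
        is_channel (m', m * l, S) \<and>
        (\<forall>z<l. (\<forall>y<k. \<forall>y0<k. D y (y0 * l + z) \<ge> 0)
              \<and> (\<forall>y0<k. (\<Sum>y<k. D y (y0 * l + z)) = 1)
              \<and> (\<forall>y<k. (\<Sum>y0<k. D y (y0 * l + z)) = 1)) \<and>
        (\<forall>y<k. \<forall>x'<m'. M y x' =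
            (\<Sum>x<m. \<Sum>z<l. \<Sum>y0<k. D y (y0 * l + z) * N y0 x * S (x * l + z) x'))))"

definition Hmin :: "chan \<Rightarrow> real" where
  "Hmin C = (case C of (m, n, W) \<Rightarrow>
     Sup {entropy n' q | n' q. prob_vec n' q \<and> (\<forall>x<m. vec_maj n' q n (\<lambda>y. W y x))})"

definition Hmax :: "chan \<Rightarrow> real" where
  "Hmax C = Inf {entropy n' q | n' q. prob_vec n' q \<and> chan_maj C (vec_chan n' q)}"

end

theory Submission
  imports Defs
begin

text \<open>Let \<open>h\<close> be the smallest column entropy, attained at the input \<open>x0\<close>. Selecting the column
  \<open>x0\<close> shows that \<open>N\<close> majorizes \<open>p_x0\<close>, so monotonicity gives \<open>HH(N) \<le> h\<close>. Conversely, if \<open>N\<close>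
  majorizes \<open>q\<close>, every entry of \<open>q\<close> is a doubly stochastic average of entries of the columns, and
  convexity of \<open>x ln x\<close> gives \<open>H(q) \<ge> h\<close>; this settles the maximal extension.

  For \<open>HH(N) \<ge> h\<close> use additivity, \<open>k HH(N) = HH(N^\<otimes>k)\<close>, and the two-level vector
  \<open>q = (e, (1 - e)/L, \<dots>, (1 - e)/L)\<close> with \<open>L \<approx> 2^(k (h - \<delta>))\<close>. Power sums of order \<open>1 + t\<close>
  (Renyi entropies) of the columns of \<open>N^\<otimes>k\<close> decay like \<open>2^(-t k (h - \<delta>/4))\<close>, so every column
  carries mass at most \<open>e\<close> on entries above \<open>1/L\<close>; this is exactly what is needed to write all
  columns as doubly stochastic images of \<open>q\<close>. Hence \<open>k HH(N) \<ge> H(q) \<approx> k (h - \<delta>)\<close>, and the same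
  vectors bound the regularized minimal extension from below. From above, any \<open>q\<close> majorizing the
  column \<open>p_x0^\<otimes>k\<close> lives on \<open>n^k\<close> points and, by the power sums of order \<open>1 - t\<close>, puts mass
  \<open>1 - e\<close> on about \<open>2^(k (h + \<delta>))\<close> points, so \<open>H(q) \<le> k (h + \<delta>) + 4\<close>.\<close>

lemma sum_lessThan_mult:
  fixes g :: "nat \<Rightarrow> 'a::comm_monoid_add"
  shows "(\<Sum>y<n1*n2. g y) = (\<Sum>i<n1. \<Sum>j<n2. g (i*n2 + j))"
proof -
  have shift: "(\<Sum>y\<in>{a..<a+k}. g y) = (\<Sum>j<k. g (a + j))" for a k
    using sum.shift_bounds_nat_ivl[of g 0 a k] by (simp add: atLeast0LessThan add.commute)
  show ?thesis
    using sum.nat_group[of g n2 n1] by (simp add: shift)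
qed

lemma sum_product_divmod:
  fixes g h :: "nat \<Rightarrow> real"
  assumes "n2 > 0"
  shows "(\<Sum>y<n1*n2. g (y div n2) * h (y mod n2)) = (\<Sum>i<n1. g i) * (\<Sum>j<n2. h j)"
  unfolding sum_lessThan_mult sum_product using assms by simp

lemma is_channelD:
  assumes "is_channel (m, n, W)"
  shows "m \<ge> 1" "\<And>x y. x < m \<Longrightarrow> y < n \<Longrightarrow> W y x \<ge> 0"
    "\<And>x. x < m \<Longrightarrow> (\<Sum>y<n. W y x) = 1"
    "\<And>x y. x \<ge> m \<or> y \<ge> n \<Longrightarrow> W y x = 0"
  using assms unfolding is_channel_def by auto

lemma is_channel_nonneg:
  assumes "is_channel (m, n, W)" shows "W y x \<ge> 0"
  using is_channelD[OF assms] by (cases "x < m \<and> y < n") auto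

lemma is_channel_outputs_pos: assumes "is_channel (m, n, W)" shows "n > 0"
  using is_channelD(1)[OF assms] is_channelD(3)[OF assms, of 0] by (cases n) auto

lemma prob_vec_column:
  assumes "is_channel (m, n, W)" "x < m"
  shows "prob_vec n (\<lambda>y. W y x)"
  using is_channelD[OF assms(1)] assms(2) unfolding prob_vec_def by auto

lemma prob_vecD:
  assumes "prob_vec n p"
  shows "p i \<ge> 0" "(\<Sum>i<n. p i) = 1" "\<And>i. i \<ge> n \<Longrightarrow> p i = 0"
proof -
  show "p i \<ge> 0" using assms unfolding prob_vec_def by (cases "i < n") auto
qed (use assms in \<open>auto simp: prob_vec_def\<close>)

lemma prob_vec_sum_pad:
  assumes "prob_vec n p" "n \<le> K"
  shows "(\<Sum>i<K. p i) = 1"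
proof -
  have "(\<Sum>i<K. p i) = (\<Sum>i<n. p i)"
    using assms prob_vecD(3)[OF assms(1)] by (intro sum.mono_neutral_right) auto
  then show ?thesis using prob_vecD(2)[OF assms(1)] by simp
qed

lemma prob_vec_le_one:
  assumes "prob_vec n p" shows "p i \<le> 1"
proof (cases "i < n")
  case True
  then have "p i \<le> (\<Sum>i<n. p i)"
    using prob_vecD(1)[OF assms] by (intro member_le_sum) auto
  then show ?thesis using prob_vecD(2)[OF assms] by simp
qed (use prob_vecD(3)[OF assms] in simp)

lemma prob_vec_length_pos: "prob_vec n p \<Longrightarrow> n > 0"
  using prob_vecD(2)[of n p] by (cases n) auto

lemma is_channel_vec_chan: "prob_vec k p \<Longrightarrow> is_channel (vec_chan k p)"
  unfolding prob_vec_def vec_chan_def is_channel_def by auto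

definition dirac0 :: "nat \<Rightarrow> real" where
  "dirac0 i = (if i = 0 then 1 else 0)"

lemma prob_vec_dirac0: "n \<ge> 1 \<Longrightarrow> prob_vec n dirac0"
  unfolding prob_vec_def dirac0_def by (auto simp: sum.delta)

lemma entropy_dirac0: "entropy n dirac0 = 0"
  unfolding entropy_def dirac0_def by (auto intro!: sum.neutral)

lemma triv_chan_eq: "triv_chan = vec_chan 1 dirac0"
  unfolding triv_chan_def vec_chan_def dirac0_def by auto

lemma tensor_eq:
  "tensor (m1, n1, N1) (m2, n2, N2) = (m1*m2, n1*n2, (\<lambda>y x. if y < n1 * n2 \<and> x < m1 * m2
     then N1 (y div n2) (x div m2) * N2 (y mod n2) (x mod m2) else 0))"
  unfolding tensor_def by simp

lemma is_channel_tensor: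
  assumes c1: "is_channel (m1, n1, N1)" and c2: "is_channel (m2, n2, N2)"
  shows "is_channel (tensor (m1, n1, N1) (m2, n2, N2))"
proof -
  have m2: "m2 > 0" using is_channelD(1)[OF c2] by simp
  have "(\<Sum>y<n1*n2. if y < n1 * n2 \<and> x < m1 * m2
      then N1 (y div n2) (x div m2) * N2 (y mod n2) (x mod m2) else 0) = 1" if "x < m1*m2" for x
  proof -
    have "x div m2 < m1" "x mod m2 < m2" using that m2 by (auto simp: less_mult_imp_div_less)
    then show ?thesis
      using that sum_product_divmod[OF is_channel_outputs_pos[OF c2],
          of "\<lambda>i. N1 i (x div m2)" "\<lambda>j. N2 j (x mod m2)" n1]
        is_channelD(3)[OF c1] is_channelD(3)[OF c2] by simp
  qed
  moreover have "m1*m2 \<ge> 1" using is_channelD(1)[OF c1] is_channelD(1)[OF c2] by simp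
  ultimately show ?thesis unfolding tensor_eq is_channel_def
    using is_channel_nonneg[OF c1] is_channel_nonneg[OF c2] by auto
qed

definition chan_mat :: "chan \<Rightarrow> nat \<Rightarrow> nat \<Rightarrow> real" where
  "chan_mat C = snd (snd C)"

lemma chan_mat_eq: "chan_mat (m, n, M) = M"
  by (simp add: chan_mat_def)

lemma tpow_eq: "tpow (m, n, W) k = (m^k, n^k, chan_mat (tpow (m, n, W) k))"
proof -
  have "fst (tpow (m, n, W) k) = m^k \<and> fst (snd (tpow (m, n, W) k)) = n^k"
  proof (induction k)
    case (Suc k)
    obtain a b M where "tpow (m, n, W) k = (a, b, M)" by (metis prod_cases3)
    then show ?case using Suc by (simp add: tensor_eq)
  qed (simp add: triv_chan_def)
  then show ?thesis unfolding chan_mat_def by (metis prod.collapse)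
qed

lemma chan_mat_tpow_Suc:
  "chan_mat (tpow (m, n, W) (Suc k)) = (\<lambda>y x. if y < n * n^k \<and> x < m * m^k
     then W (y div n^k) (x div m^k) * chan_mat (tpow (m, n, W) k) (y mod n^k) (x mod m^k) else 0)"
proof -
  have "tpow (m, n, W) (Suc k) = tensor (m, n, W) (m^k, n^k, chan_mat (tpow (m, n, W) k))"
    using tpow_eq[of m n W k] by (metis tpow.simps(2))
  then show ?thesis by (simp only: tensor_eq chan_mat_eq)
qed

lemma is_channel_chan_mat_tpow:
  assumes "is_channel (m, n, W)"
  shows "is_channel (m^k, n^k, chan_mat (tpow (m, n, W) k))"
proof (induction k)
  case 0 then show ?case
    using is_channel_vec_chan[OF prob_vec_dirac0] tpow_eq[of m n W 0] by (simp add: triv_chan_eq)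
next
  case (Suc k)
  then show ?case
    using is_channel_tensor[OF assms Suc] tpow_eq[of m n W k] tpow_eq[of m n W "Suc k"] by simp
qed

lemma is_channel_tpow: "is_channel (m, n, W) \<Longrightarrow> is_channel (tpow (m, n, W) k)"
  using is_channel_chan_mat_tpow by (subst tpow_eq) simp

lemma additive_tpow:
  fixes HH :: "chan \<Rightarrow> real"
  assumes additive: "\<And>C1 C2. is_channel C1 \<Longrightarrow> is_channel C2 \<Longrightarrow> HH (tensor C1 C2) = HH C1 + HH C2"
    and norm: "\<And>k p. prob_vec k p \<Longrightarrow> HH (vec_chan k p) = entropy k p"
    and chan: "is_channel (m, n, W)"
  shows "HH (tpow (m, n, W) k) = real k * HH (m, n, W)"
proof (induction k)
  case 0
  then show ?case using norm[OF prob_vec_dirac0] entropy_dirac0 by (simp add: triv_chan_eq)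
next
  case (Suc k)
  have "HH (tpow (m, n, W) (Suc k)) = HH (m, n, W) + HH (tpow (m, n, W) k)"
    using additive[OF chan is_channel_chan_mat_tpow[OF chan, of k]] tpow_eq[of m n W k] by simp
  then show ?case using Suc by (simp add: algebra_simps)
qed

lemma powsum_tpow_column:
  assumes chan: "is_channel (m, n, W)" and x: "x < m * m^k"
  shows "(\<Sum>y<n^Suc k. chan_mat (tpow (m, n, W) (Suc k)) y x powr s)
    = (\<Sum>y<n. W y (x div m^k) powr s) * (\<Sum>y<n^k. chan_mat (tpow (m, n, W) k) y (x mod m^k) powr s)"
proof -
  have "(\<Sum>y<n^Suc k. chan_mat (tpow (m, n, W) (Suc k)) y x powr s)
      = (\<Sum>y<n*n^k. W (y div n^k) (x div m^k) powr s * chan_mat (tpow (m, n, W) k) (y mod n^k) (x mod m^k) powr s)"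
    unfolding chan_mat_tpow_Suc using x is_channel_nonneg[OF chan]
      is_channel_nonneg[OF is_channel_chan_mat_tpow[OF chan]] by (intro sum.cong) (auto simp: powr_mult)
  also have "\<dots> = (\<Sum>y<n. W y (x div m^k) powr s) * (\<Sum>y<n^k. chan_mat (tpow (m, n, W) k) y (x mod m^k) powr s)"
    using is_channel_outputs_pos[OF chan] by (intro sum_product_divmod) simp
  finally show ?thesis .
qed

lemma powsum_tpow_column_le:
  assumes chan: "is_channel (m, n, W)" and rho: "rho \<ge> 0"
    and base: "\<And>x. x < m \<Longrightarrow> (\<Sum>y<n. W y x powr s) \<le> rho"
  shows "x < m^k \<Longrightarrow> (\<Sum>y<n^k. chan_mat (tpow (m, n, W) k) y x powr s) \<le> rho ^ k"
proof (induction k arbitrary: x)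
  case 0
  then show ?case using tpow_eq[of m n W 0] by (simp add: triv_chan_def chan_mat_def)
next
  case (Suc k)
  have m: "m^k > 0" using is_channelD(1)[OF chan] by simp
  have "x div m^k < m" "x mod m^k < m^k"
    using Suc.prems m by (auto simp: less_mult_imp_div_less mult.commute)
  then show ?case
    unfolding powsum_tpow_column[OF chan Suc.prems[simplified]]
    using base Suc.IH rho by (auto intro!: mult_mono sum_nonneg)
qed

text \<open>Index of the input word \<open>(x, \<dots>, x)\<close> of \<open>N^\<otimes>k\<close> under the encoding of \<open>tensor\<close>.\<close>

fun diag_index :: "nat \<Rightarrow> nat \<Rightarrow> nat \<Rightarrow> nat" where
  "diag_index m x 0 = 0"
| "diag_index m x (Suc k) = x * m^k + diag_index m x k"

lemma diag_index_less: "x < m \<Longrightarrow> diag_index m x k < m^k"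
proof (induction k)
  case (Suc k)
  have "x * m^k + diag_index m x k < (x + 1) * m^k" using Suc by simp
  also have "\<dots> \<le> m * m^k" using Suc.prems by (intro mult_right_mono) auto
  finally show ?case by simp
qed simp

lemma powsum_tpow_diag_column:
  assumes chan: "is_channel (m, n, W)" and x: "x < m"
  shows "(\<Sum>y<n^k. chan_mat (tpow (m, n, W) k) y (diag_index m x k) powr s) = (\<Sum>y<n. W y x powr s) ^ k"
proof (induction k)
  case 0
  then show ?case using tpow_eq[of m n W 0] by (simp add: triv_chan_def chan_mat_def)
next
  case (Suc k)
  have "diag_index m x k < m^k" by (rule diag_index_less[OF x])
  moreover have "m^k > 0" using x by simp
  ultimately have "diag_index m x (Suc k) div m^k = x" "diag_index m x (Suc k) mod m^k = diag_index m x k"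
    by auto
  then show ?case
    using powsum_tpow_column[OF chan, of "diag_index m x (Suc k)" k s] diag_index_less[OF x, of "Suc k"] Suc.IH
    by simp
qed


lemma entropy_ln: "entropy n p = - (\<Sum>i<n. p i * ln (p i)) / ln 2"
  unfolding entropy_def log_def by (simp add: sum_divide_distrib, intro sum.cong) auto

lemma sum_xlnx_zero_extend:
  fixes p :: "nat \<Rightarrow> real"
  assumes "\<And>i. i \<ge> n \<Longrightarrow> p i = 0" "n \<le> k"
  shows "(\<Sum>i<k. p i * ln (p i)) = (\<Sum>i<n. p i * ln (p i))"
  using assms by (intro sum.mono_neutral_right) (auto simp: not_less)

lemma xlnx_nonpos: "(0::real) \<le> x \<Longrightarrow> x \<le> 1 \<Longrightarrow> x * ln x \<le> 0"
  by (cases "x = 0") (auto intro: mult_nonneg_nonpos)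

lemma neg_xlnx_le_one: "0 \<le> x \<Longrightarrow> - (x * ln x) \<le> (1::real)"
proof (cases "x = 0")
  case False
  assume "0 \<le> x"
  then have x: "x > 0" using False by simp
  have "- (x * ln x) = x * ln (1 / x)" using x by (simp add: ln_div)
  also have "\<dots> \<le> x * (1 / x - 1)" using x by (intro mult_left_mono ln_le_minus_one) auto
  also have "\<dots> = 1 - x" using x by (simp add: field_simps)
  finally show ?thesis using x by simp
qed simp

lemma entropy_nonneg:
  assumes "prob_vec n p" shows "entropy n p \<ge> 0"
proof -
  have "(\<Sum>i<n. p i * ln (p i)) \<le> 0"
    using prob_vecD(1)[OF assms] prob_vec_le_one[OF assms] by (intro sum_nonpos xlnx_nonpos)
  then show ?thesis unfolding entropy_ln by (simp add: divide_nonpos_pos)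
qed

lemma log_sum_inequality:
  fixes a b :: "'i \<Rightarrow> real"
  assumes fin: "finite I" and nn: "\<And>i. i \<in> I \<Longrightarrow> a i \<ge> 0 \<and> b i \<ge> 0 \<and> (b i = 0 \<longrightarrow> a i = 0)"
    and B: "sum b I > 0"
  shows "sum a I * ln (sum a I / sum b I) \<le> (\<Sum>i\<in>I. a i * ln (a i / b i))"
proof -
  have A: "sum a I \<ge> 0" using nn by (intro sum_nonneg) auto
  have termwise: "a i * ln (sum a I / sum b I) - a i * ln (a i / b i) \<le> b i * sum a I / sum b I - a i"
    if i: "i \<in> I" for i
  proof (cases "a i = 0")
    case False
    have "a i \<le> sum a I" using i nn fin by (intro member_le_sum) auto
    then have pos: "a i > 0" "b i > 0" "sum a I > 0" using False nn[OF i] by auto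
    then have "a i * ln (sum a I / sum b I) - a i * ln (a i / b i)
        = a i * ln ((sum a I * b i) / (sum b I * a i))"
      using B by (simp add: ln_div ln_mult algebra_simps)
    also have "\<dots> \<le> a i * ((sum a I * b i) / (sum b I * a i) - 1)"
      using pos B by (intro mult_left_mono ln_le_minus_one) auto
    also have "\<dots> = b i * sum a I / sum b I - a i" using pos by (simp add: field_simps)
    finally show ?thesis .
  qed (use nn[OF i] A B in simp)
  have "(\<Sum>i\<in>I. a i * ln (sum a I / sum b I) - a i * ln (a i / b i))
        \<le> (\<Sum>i\<in>I. b i * sum a I / sum b I - a i)"
    by (intro sum_mono termwise)
  also have "\<dots> = 0"
    using B by (simp add: sum_subtractf sum_divide_distrib[symmetric] sum_distrib_right[symmetric])
  finally show ?thesis by (simp add: sum_subtractf sum_distrib_right[symmetric])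
qed

lemma xlnx_convex_sum:
  fixes b w :: "'i \<Rightarrow> real"
  assumes fin: "finite I" and b: "\<And>i. i \<in> I \<Longrightarrow> b i \<ge> 0" "sum b I = 1"
    and w: "\<And>i. i \<in> I \<Longrightarrow> w i \<ge> 0"
  shows "(\<Sum>i\<in>I. b i * w i) * ln (\<Sum>i\<in>I. b i * w i) \<le> (\<Sum>i\<in>I. b i * (w i * ln (w i)))"
proof -
  have "(\<Sum>i\<in>I. b i * w i) * ln ((\<Sum>i\<in>I. b i * w i) / sum b I)
      \<le> (\<Sum>i\<in>I. b i * w i * ln (b i * w i / b i))"
    using b w by (intro log_sum_inequality[OF fin]) auto
  also have "\<dots> = (\<Sum>i\<in>I. b i * (w i * ln (w i)))"
    by (intro sum.cong) auto
  finally show ?thesis using b by simp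
qed

lemma sum_xlnx_mixture_le:
  fixes \<beta> :: "nat \<Rightarrow> 'i \<Rightarrow> real" and \<omega> :: "'i \<Rightarrow> real"
  assumes fin: "finite I" and \<beta>: "\<And>y i. y < k \<Longrightarrow> i \<in> I \<Longrightarrow> \<beta> y i \<ge> 0" "\<And>y. y < k \<Longrightarrow> sum (\<beta> y) I = 1"
    and \<omega>: "\<And>i. i \<in> I \<Longrightarrow> \<omega> i \<ge> 0"
  shows "(\<Sum>y<k. (\<Sum>i\<in>I. \<beta> y i * \<omega> i) * ln (\<Sum>i\<in>I. \<beta> y i * \<omega> i))
    \<le> (\<Sum>i\<in>I. (\<Sum>y<k. \<beta> y i) * (\<omega> i * ln (\<omega> i)))"
proof -
  have "(\<Sum>y<k. (\<Sum>i\<in>I. \<beta> y i * \<omega> i) * ln (\<Sum>i\<in>I. \<beta> y i * \<omega> i))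
      \<le> (\<Sum>y<k. \<Sum>i\<in>I. \<beta> y i * (\<omega> i * ln (\<omega> i)))"
    using \<beta> \<omega> by (intro sum_mono xlnx_convex_sum[OF fin]) auto
  also have "\<dots> = (\<Sum>i\<in>I. (\<Sum>y<k. \<beta> y i) * (\<omega> i * ln (\<omega> i)))"
    by (simp add: sum.swap[of _ "{..<k}"] sum_distrib_right)
  finally show ?thesis .
qed

lemma chan_maj_column:
  assumes chan: "is_channel (m, n, W)" and x0: "x0 < m"
  shows "chan_maj (m, n, W) (vec_chan n (\<lambda>y. W y x0))"
proof -
  define S :: "nat \<Rightarrow> nat \<Rightarrow> real" where "S = (\<lambda>i x'. if x' = 0 \<and> i = x0 then 1 else 0)"
  define D :: "nat \<Rightarrow> nat \<Rightarrow> real" where "D = (\<lambda>y i. if y = i then 1 else 0)"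
  have S: "is_channel (1, m * 1, S)"
    unfolding is_channel_def S_def using x0 by auto
  have D: "\<forall>z<1. (\<forall>y<n. \<forall>y0<n. D y (y0 * 1 + z) \<ge> 0)
      \<and> (\<forall>y0<n. (\<Sum>y<n. D y (y0 * 1 + z)) = 1) \<and> (\<forall>y<n. (\<Sum>y0<n. D y (y0 * 1 + z)) = 1)"
    unfolding D_def by auto
  have "(if x' = 0 then W y x0 else 0) =
      (\<Sum>x<m. \<Sum>z<1. \<Sum>y0<n. D y (y0 * 1 + z) * W y0 x * S (x * 1 + z) x')"
    if "y < n" "x' < 1" for y x'
  proof -
    have "(\<Sum>x<m. \<Sum>z<1. \<Sum>y0<n. D y (y0 * 1 + z) * W y0 x * S (x * 1 + z) x')
        = (\<Sum>x<m. if x = x0 then W y x else 0)"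
      using that unfolding D_def S_def
      by (intro sum.cong refl) (auto simp: if_distrib[where f="\<lambda>u. u * _"] cong: if_cong)
    then show ?thesis using x0 that by simp
  qed
  then show ?thesis unfolding chan_maj_def vec_chan_def Let_def
    using S D by (simp only: prod.case max.idem) blast
qed

text \<open>Each output probability \<open>q y\<close> of \<open>D \<circ> (N \<otimes> id) \<circ> S\<close> is a convex combination of the
  entries \<open>W y0 x\<close>, with weights that also sum to one over \<open>y\<close> since \<open>D\<close> is doubly stochastic;
  Jensen's inequality for \<open>x ln x\<close> then averages the column entropies.\<close>

lemma entropy_ge_of_chan_maj:
  assumes chan: "is_channel (m, n, W)" and maj: "chan_maj (m, n, W) (vec_chan n' q)"
    and pv: "prob_vec n' q" and hx: "\<And>x. x < m \<Longrightarrow> h \<le> entropy n (\<lambda>y. W y x)"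
  shows "h \<le> entropy n' q"
proof -
  define k where "k = max n n'"
  obtain l S D where S: "is_channel (1, m * l, S)"
    and D: "\<And>z. z < l \<Longrightarrow> (\<forall>y<k. \<forall>y0<k. D y (y0 * l + z) \<ge> 0)
              \<and> (\<forall>y0<k. (\<Sum>y<k. D y (y0 * l + z)) = 1) \<and> (\<forall>y<k. (\<Sum>y0<k. D y (y0 * l + z)) = 1)"
    and q: "\<And>y. y < k \<Longrightarrow> q y = (\<Sum>x<m. \<Sum>z<l. \<Sum>y0<k. D y (y0 * l + z) * W y0 x * S (x * l + z) 0)"
    using maj unfolding chan_maj_def vec_chan_def Let_def k_def by auto
  define I where "I = {..<m} \<times> {..<l} \<times> {..<k}"
  define \<beta> where "\<beta> = (\<lambda>y (x, z, y0). D y (y0 * l + z) * S (x * l + z) 0)"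
  define \<omega> where "\<omega> = (\<lambda>(x::nat, z::nat, y0). W y0 x)"
  have nested: "(\<Sum>(x, z, y0)\<in>I. f x z y0) = (\<Sum>x<m. \<Sum>z<l. \<Sum>y0<k. f x z y0)" for f :: "_ \<Rightarrow> _ \<Rightarrow> _ \<Rightarrow> real"
    unfolding I_def by (simp add: sum.cartesian_product)
  have S1: "(\<Sum>x<m. \<Sum>z<l. S (x * l + z) 0) = 1"
    using is_channelD(3)[OF S, of 0] sum_lessThan_mult[of "\<lambda>i. S i 0" m l] by simp
  have qy: "q y = (\<Sum>i\<in>I. \<beta> y i * \<omega> i)" if "y < k" for y
  proof -
    have "(\<Sum>i\<in>I. \<beta> y i * \<omega> i) = (\<Sum>(x, z, y0)\<in>I. D y (y0 * l + z) * W y0 x * S (x * l + z) 0)"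
      unfolding \<beta>_def \<omega>_def by (intro sum.cong) auto
    then show ?thesis unfolding nested q[OF that] by simp
  qed
  have "(\<Sum>y<k. q y * ln (q y)) = (\<Sum>y<k. (\<Sum>i\<in>I. \<beta> y i * \<omega> i) * ln (\<Sum>i\<in>I. \<beta> y i * \<omega> i))"
    using qy by simp
  also have "\<dots> \<le> (\<Sum>i\<in>I. (\<Sum>y<k. \<beta> y i) * (\<omega> i * ln (\<omega> i)))"
  proof (rule sum_xlnx_mixture_le)
    show "sum (\<beta> y) I = 1" if "y < k" for y
      unfolding \<beta>_def nested using D that S1 by (simp add: sum_distrib_right[symmetric])
  qed (use D in \<open>auto simp: I_def \<beta>_def \<omega>_def is_channel_nonneg[OF chan] is_channel_nonneg[OF S]\<close>)
  also have "\<dots> = (\<Sum>x<m. \<Sum>z<l. S (x * l + z) 0 * (\<Sum>y0<k. W y0 x * ln (W y0 x)))"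
  proof -
    have "(\<Sum>i\<in>I. (\<Sum>y<k. \<beta> y i) * (\<omega> i * ln (\<omega> i)))
        = (\<Sum>(x, z, y0)\<in>I. S (x * l + z) 0 * (W y0 x * ln (W y0 x)))"
      using D unfolding I_def \<beta>_def \<omega>_def by (intro sum.cong) (auto simp: sum_distrib_right[symmetric])
    then show ?thesis unfolding nested by (simp add: sum_distrib_left)
  qed
  also have "\<dots> \<le> (\<Sum>x<m. \<Sum>z<l. S (x * l + z) 0 * (- h * ln 2))"
  proof (intro sum_mono mult_left_mono is_channel_nonneg[OF S])
    fix x assume "x \<in> {..<m}"
    have "(\<Sum>y0<k. W y0 x * ln (W y0 x)) = - entropy n (\<lambda>y. W y x) * ln 2"
      unfolding k_def entropy_ln using is_channelD(4)[OF chan] by (subst sum_xlnx_zero_extend) auto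
    then show "(\<Sum>y0<k. W y0 x * ln (W y0 x)) \<le> - h * ln 2" using hx \<open>x \<in> {..<m}\<close> by simp
  qed
  also have "\<dots> = - h * ln 2" using S1 by (simp only: sum_distrib_right[symmetric])
  finally have "(\<Sum>y<k. q y * ln (q y)) \<le> - h * ln 2" .
  moreover have "(\<Sum>y<k. q y * ln (q y)) = (\<Sum>y<n'. q y * ln (q y))"
    unfolding k_def using prob_vecD(3)[OF pv] by (intro sum_xlnx_zero_extend) auto
  ultimately show ?thesis unfolding entropy_ln by (simp add: field_simps)
qed

definition doubly_stochastic :: "nat \<Rightarrow> (nat \<Rightarrow> nat \<Rightarrow> real) \<Rightarrow> bool" where
  "doubly_stochastic K D \<longleftrightarrow> (\<forall>y<K. \<forall>y0<K. D y y0 \<ge> 0)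
     \<and> (\<forall>y0<K. (\<Sum>y<K. D y y0) = 1) \<and> (\<forall>y<K. (\<Sum>y0<K. D y y0) = 1)"

text \<open>The register \<open>Z\<close> carries the column index, so each column may use its own doubly
  stochastic matrix.\<close>

lemma chan_maj_vec_chanI:
  assumes M: "M \<ge> 1"
    and DS: "\<And>z. z < M \<Longrightarrow> \<exists>D. doubly_stochastic (max n' K0) D
        \<and> (\<forall>y<max n' K0. Wc y z = (\<Sum>y0<max n' K0. D y y0 * q y0))"
  shows "chan_maj (vec_chan n' q) (M, K0, Wc)"
proof -
  define k where "k = max n' K0"
  obtain Df where Df: "\<And>z. z < M \<Longrightarrow> doubly_stochastic k (Df z)
      \<and> (\<forall>y<k. Wc y z = (\<Sum>y0<k. Df z y y0 * q y0))"
    using DS unfolding k_def by metis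
  define S :: "nat \<Rightarrow> nat \<Rightarrow> real" where "S = (\<lambda>i x'. if i = x' \<and> x' < M then 1 else 0)"
  define D where "D = (\<lambda>y i. Df (i mod M) y (i div M))"
  have S: "is_channel (M, 1 * M, S)" unfolding is_channel_def S_def using M by auto
  have D: "\<forall>z<M. (\<forall>y<k. \<forall>y0<k. D y (y0 * M + z) \<ge> 0)
      \<and> (\<forall>y0<k. (\<Sum>y<k. D y (y0 * M + z)) = 1) \<and> (\<forall>y<k. (\<Sum>y0<k. D y (y0 * M + z)) = 1)"
    unfolding D_def using Df unfolding doubly_stochastic_def by simp
  have "Wc y x' = (\<Sum>x<1. \<Sum>z<M. \<Sum>y0<k. D y (y0 * M + z) * (if x = 0 then q y0 else 0) * S (x * M + z) x')"
    if "y < k" "x' < M" for y x'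
  proof -
    have "(\<Sum>x<1. \<Sum>z<M. \<Sum>y0<k. D y (y0 * M + z) * (if x = 0 then q y0 else 0) * S (x * M + z) x')
       = (\<Sum>z<M. \<Sum>y0<k. D y (y0 * M + z) * q y0 * S z x')" by simp
    also have "\<dots> = (\<Sum>z<M. if z = x' then (\<Sum>y0<k. Df z y y0 * q y0) else 0)"
      unfolding D_def S_def using that by (intro sum.cong refl) auto
    finally show ?thesis using that Df by simp
  qed
  then show ?thesis unfolding chan_maj_def vec_chan_def Let_def prod.case
    using S D M unfolding k_def by blast
qed

text \<open>The columns outside \<open>J\<close> are filled uniformly with the row deficits.\<close>

lemma doubly_stochastic_extension:
  fixes J :: "nat set" and col :: "nat \<Rightarrow> nat \<Rightarrow> real"
  assumes J: "J \<subseteq> {..<K}" "card J < K"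
    and col_nonneg: "\<And>j y. j \<in> J \<Longrightarrow> y < K \<Longrightarrow> col j y \<ge> 0"
    and col_sum: "\<And>j. j \<in> J \<Longrightarrow> (\<Sum>y<K. col j y) = 1"
    and row_sum: "\<And>y. y < K \<Longrightarrow> (\<Sum>j\<in>J. col j y) \<le> 1"
    and q: "\<And>i. i < K \<Longrightarrow> i \<notin> J \<Longrightarrow> q i = 0"
  shows "\<exists>D. doubly_stochastic K D \<and> (\<forall>y<K. (\<Sum>y0<K. D y y0 * q y0) = (\<Sum>j\<in>J. col j y * q j))"
proof -
  define D where "D = (\<lambda>y y0. if y0 \<in> J then col y0 y else (1 - (\<Sum>j\<in>J. col j y)) / (K - card J))"
  have finJ: "finite J" using J finite_subset by blast
  have gap: "real K - real (card J) > 0" using J by simp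
  have "(\<Sum>y0<K. D y y0) = 1" for y
  proof -
    have "(\<Sum>y0<K. D y y0) = (\<Sum>y0\<in>J. D y y0) + (\<Sum>y0\<in>{..<K} - J. D y y0)"
      using J finJ by (metis finite_lessThan sum.subset_diff add.commute)
    also have "\<dots> = (\<Sum>j\<in>J. col j y) + real (K - card J) * ((1 - (\<Sum>j\<in>J. col j y)) / (K - card J))"
      using J finJ by (simp add: D_def card_Diff_subset)
    finally show ?thesis using gap J by (simp add: of_nat_diff)
  qed
  moreover have "(\<Sum>y<K. D y y0) = 1" if "y0 < K" for y0
  proof (cases "y0 \<in> J")
    case False
    have "(\<Sum>y<K. D y y0) = (real K - (\<Sum>j\<in>J. \<Sum>y<K. col j y)) / (K - card J)"
      unfolding D_def using False by (simp add: sum_divide_distrib[symmetric] sum_subtractf sum.swap[of _ J])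
    then show ?thesis using col_sum gap J by (simp add: of_nat_diff)
  qed (simp add: D_def col_sum)
  moreover have "D y y0 \<ge> 0" if "y < K" for y y0
    unfolding D_def using col_nonneg row_sum that gap by (auto intro!: divide_nonneg_pos simp: of_nat_diff)
  moreover have "(\<Sum>y0<K. D y y0 * q y0) = (\<Sum>j\<in>J. col j y * q j)" for y
  proof -
    have "(\<Sum>y0<K. D y y0 * q y0) = (\<Sum>y0\<in>J. D y y0 * q y0)"
      using J q by (intro sum.mono_neutral_right) auto
    then show ?thesis unfolding D_def by simp
  qed
  ultimately show ?thesis unfolding doubly_stochastic_def by blast
qed

lemma dirac0_doubly_stochastic:
  assumes c: "prob_vec K0 c" and K: "K0 < K"
  shows "\<exists>D. doubly_stochastic K D \<and> (\<forall>y<K. c y = (\<Sum>y0<K. D y y0 * dirac0 y0))"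
proof -
  have "\<exists>D. doubly_stochastic K D \<and> (\<forall>y<K. (\<Sum>y0<K. D y y0 * dirac0 y0) = (\<Sum>j\<in>{0}. c y * dirac0 j))"
    using c K prob_vec_length_pos[OF c] prob_vecD[OF c] prob_vec_sum_pad[OF c, of K] prob_vec_le_one[OF c]
    by (intro doubly_stochastic_extension) (auto simp: dirac0_def)
  then show ?thesis by (auto simp: dirac0_def)
qed

definition two_level :: "real \<Rightarrow> nat \<Rightarrow> nat \<Rightarrow> real" where
  "two_level e L i = (if i = 0 then e else if i \<le> L then (1 - e) / L else 0)"

lemma sum_two_level_prefix:
  fixes f :: "real \<Rightarrow> real"
  assumes "1 \<le> j" "f 0 = 0"
  shows "(\<Sum>i<j. f (two_level e L i)) = f e + real (min (j - 1) L) * f ((1 - e) / L)"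
proof -
  obtain j' where j: "j = Suc j'" using assms(1) by (cases j) auto
  have "(\<Sum>i<j'. f (two_level e L (Suc i))) = (\<Sum>i<j'. if i < L then f ((1 - e) / L) else 0)"
    using assms(2) by (intro sum.cong) (auto simp: two_level_def)
  also have "\<dots> = real (min j' L) * f ((1 - e) / L)"
    by (induction j') (auto simp: min_def algebra_simps)
  finally show ?thesis unfolding j sum.lessThan_Suc_shift by (simp add: two_level_def)
qed

lemma prob_vec_two_level:
  assumes e: "0 \<le> e" "e \<le> 1" and L: "L \<ge> 1" "L < K"
  shows "prob_vec K (two_level e L)"
proof -
  have "(\<Sum>i<K. two_level e L i) = 1"
    using sum_two_level_prefix[of K "\<lambda>x. x" e L] L by (simp add: min_absorb2)
  then show ?thesis unfolding prob_vec_def using e L by (auto simp: two_level_def)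
qed

lemma entropy_two_level_ge:
  assumes e: "0 < e" "e < 1" and L: "L \<ge> 1" "L < K"
  shows "(1 - e) * log 2 L \<le> entropy K (two_level e L)"
proof -
  have "(\<Sum>i<K. two_level e L i * ln (two_level e L i))
      = e * ln e + L * ((1 - e) / L * ln ((1 - e) / L))"
    using sum_two_level_prefix[of K "\<lambda>x. x * ln x" e L] L by (simp add: min_absorb2)
  also have "\<dots> = e * ln e + (1 - e) * ln (1 - e) - (1 - e) * ln L"
    using L e by (simp add: ln_div right_diff_distrib)
  also have "\<dots> \<le> - (1 - e) * ln L"
    using xlnx_nonpos[of e] xlnx_nonpos[of "1 - e"] e by linarith
  finally have "(1 - e) * ln L \<le> - (\<Sum>i<K. two_level e L i * ln (two_level e L i))"
    by (simp add: algebra_simps)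
  then have "(1 - e) * ln L / ln 2 \<le> - (\<Sum>i<K. two_level e L i * ln (two_level e L i)) / ln 2"
    by (intro divide_right_mono) auto
  then show ?thesis unfolding entropy_ln log_def by simp
qed

lemma heavy_light_mass:
  assumes c: "prob_vec K0 c" and th: "th > 0"
  shows "(\<Sum>y<K0. if c y > th then 0 else c y) = 1 - (\<Sum>y<K0. if c y > th then c y else 0)"
    and "c y > th \<Longrightarrow> c y \<le> (\<Sum>y<K0. if c y > th then c y else 0)"
proof -
  have "(\<Sum>y<K0. if c y > th then c y else 0) + (\<Sum>y<K0. if c y > th then 0 else c y) = (\<Sum>y<K0. c y)"
    by (subst sum.distrib[symmetric]) (rule sum.cong, auto)
  then show "(\<Sum>y<K0. if c y > th then 0 else c y) = 1 - (\<Sum>y<K0. if c y > th then c y else 0)"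
    using prob_vecD(2)[OF c] by simp
  assume "c y > th"
  then have "y < K0" using th prob_vecD(3)[OF c, of y] by (cases "y < K0") auto
  then have "(if c y > th then c y else 0) \<le> (\<Sum>y<K0. if c y > th then c y else 0)"
    using prob_vecD(1)[OF c] by (intro member_le_sum) auto
  then show "c y \<le> (\<Sum>y<K0. if c y > th then c y else 0)" using \<open>c y > th\<close> by simp
qed

text \<open>Splitting \<open>c\<close> into its heavy entries (above \<open>(1 - e) / (L + 1)\<close>, total mass \<open>b \<le> e\<close>)
  and its light entries, \<open>c = e v + (1 - e) w\<close> where \<open>v\<close> carries all heavy mass and \<open>w\<close> only
  light mass; the threshold makes \<open>v + L w \<le> 1\<close>, which is what allows \<open>v\<close> and \<open>L\<close> copies of
  \<open>w\<close> to be columns of one doubly stochastic matrix.\<close>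

lemma two_level_columns:
  fixes L :: nat
  assumes e: "0 < e" "e < 1" and c: "prob_vec K0 c"
    and tail: "(\<Sum>y<K0. if c y > (1 - e) / (L + 1) then c y else 0) \<le> e"
  obtains v w where "\<And>y. v y \<ge> 0" "\<And>y. w y \<ge> 0" "(\<Sum>y<K0. v y) = 1" "(\<Sum>y<K0. w y) = 1"
    "\<And>y. c y = 0 \<Longrightarrow> v y = 0 \<and> w y = 0" "\<And>y. e * v y + (1 - e) * w y = c y"
    "\<And>y. v y + real L * w y \<le> 1"
proof -
  define th where "th = (1 - e) / (L + 1)"
  have th: "th > 0" unfolding th_def using e by simp
  define b where "b = (\<Sum>y<K0. if c y > th then c y else 0)"
  have b: "0 \<le> b" "b \<le> e" "b < 1" using e tail prob_vecD(1)[OF c] unfolding b_def th_def by (auto intro: sum_nonneg)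
  obtain light: "(\<Sum>y<K0. if c y > th then 0 else c y) = 1 - b"
    and heavy_le_b: "\<And>y. c y > th \<Longrightarrow> c y \<le> b"
    using heavy_light_mass[OF c th] unfolding b_def by blast
  define r where "r = (e - b) / (e * (1 - b))"
  have r: "0 \<le> r" "r \<le> 1 / (1 - b)"
    unfolding r_def using e b mult_left_le_one_le[of b b] by (auto simp: field_simps)
  define v where "v = (\<lambda>y. if c y > th then c y / e else c y * r)"
  define w where "w = (\<lambda>y. if c y > th then 0 else c y / (1 - b))"
  have "(\<Sum>y<K0. v y) = (\<Sum>y<K0. if c y > th then c y / e else 0) + (\<Sum>y<K0. if c y > th then 0 else c y * r)"
    unfolding v_def by (subst sum.distrib[symmetric]) (rule sum.cong, auto)
  moreover have "(\<Sum>y<K0. if c y > th then c y / e else 0) = b / e"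
    unfolding b_def by (simp add: sum_divide_distrib, intro sum.cong) auto
  moreover have "(\<Sum>y<K0. if c y > th then 0 else c y * r) = (1 - b) * r"
    unfolding light[symmetric] by (simp add: sum_distrib_right, intro sum.cong) auto
  moreover have "b / e + (1 - b) * r = 1" unfolding r_def using e b by (simp add: field_simps)
  ultimately have v_sum: "(\<Sum>y<K0. v y) = 1" by simp
  have "(\<Sum>y<K0. w y) = (\<Sum>y<K0. if c y > th then 0 else c y) / (1 - b)"
    unfolding w_def by (simp add: sum_divide_distrib, intro sum.cong) auto
  then have w_sum: "(\<Sum>y<K0. w y) = 1" using light b e by simp
  have er: "e * r + (1 - e) / (1 - b) = 1"
  proof -
    have "e * r = (e - b) / (1 - b)" unfolding r_def using e by simp
    then show ?thesis using b by (simp add: add_divide_distrib[symmetric])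
  qed
  have mix: "e * v y + (1 - e) * w y = c y" for y
  proof (cases "c y > th")
    case False
    then have "e * v y + (1 - e) * w y = c y * (e * r + (1 - e) / (1 - b))"
      unfolding v_def w_def by (simp add: algebra_simps)
    then show ?thesis using er by simp
  qed (use e in \<open>simp add: v_def w_def\<close>)
  have row: "v y + L * w y \<le> 1" for y
  proof (cases "c y > th")
    case True then show ?thesis using heavy_le_b[OF True] b e unfolding v_def w_def by simp
  next
    case False
    have "c y * r \<le> c y * (1 / (1 - b))"
      using r prob_vecD(1)[OF c, of y] by (intro mult_left_mono) auto
    then have "v y + L * w y \<le> (L + 1) * c y / (1 - b)"
      using False unfolding v_def w_def by (simp add: add_divide_distrib algebra_simps)
    also have "\<dots> \<le> (L + 1) * th / (1 - b)"
      using False b e by (intro divide_right_mono mult_left_mono) auto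
    also have "\<dots> \<le> 1" unfolding th_def using b e by simp
    finally show ?thesis .
  qed
  show ?thesis
    by (rule that[of v w]) (use prob_vecD(1)[OF c] r b e th v_sum w_sum mix row in \<open>auto simp: v_def w_def\<close>)
qed

lemma two_level_doubly_stochastic:
  fixes L :: nat
  assumes e: "0 < e" "e < 1" and L: "L \<ge> 1" "L + 1 < K" and c: "prob_vec K0 c" "K0 \<le> K"
    and tail: "(\<Sum>y<K0. if c y > (1 - e) / (L + 1) then c y else 0) \<le> e"
  shows "\<exists>D. doubly_stochastic K D \<and> (\<forall>y<K. c y = (\<Sum>y0<K. D y y0 * two_level e L y0))"
proof -
  obtain v w :: "nat \<Rightarrow> real" where vw: "\<And>y. v y \<ge> 0" "\<And>y. w y \<ge> 0" "(\<Sum>y<K0. v y) = 1" "(\<Sum>y<K0. w y) = 1"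
    "\<And>y. c y = 0 \<Longrightarrow> v y = 0 \<and> w y = 0" "\<And>y. e * v y + (1 - e) * w y = c y"
    "\<And>y. v y + real L * w y \<le> 1"
    using two_level_columns[OF e c(1) tail] by metis
  define col :: "nat \<Rightarrow> nat \<Rightarrow> real" where "col = (\<lambda>j. if j = 0 then v else w)"
  have pad: "(\<Sum>y<K. f y) = (\<Sum>y<K0. f y)" if "\<And>y. c y = 0 \<Longrightarrow> f y = 0" for f :: "nat \<Rightarrow> real"
    using c that prob_vecD(3)[OF c(1)] by (intro sum.mono_neutral_right) auto
  have rows: "(\<Sum>j<L+1. col j y) = v y + L * w y" for y
    unfolding col_def Suc_eq_plus1[symmetric] sum.lessThan_Suc_shift by simp
  have mix: "(\<Sum>j<L+1. col j y * two_level e L j) = c y" for y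
  proof -
    have "(\<Sum>j<L+1. col j y * two_level e L j) = e * v y + (1 - e) * w y"
      unfolding col_def Suc_eq_plus1[symmetric] sum.lessThan_Suc_shift using L
      by (simp add: two_level_def)
    then show ?thesis using vw(6) by simp
  qed
  have "\<exists>D. doubly_stochastic K D \<and> (\<forall>y<K. (\<Sum>y0<K. D y y0 * two_level e L y0) = (\<Sum>j\<in>{..<L+1}. col j y * two_level e L j))"
  proof (rule doubly_stochastic_extension)
    show "(\<Sum>y<K. col j y) = 1" if "j \<in> {..<L+1}" for j
      using vw(3,4,5) unfolding col_def by (subst pad) auto
  qed (use L vw rows in \<open>auto simp: col_def two_level_def\<close>)
  then show ?thesis using mix by auto
qed

lemma sum_le_topsum:
  assumes "S \<subseteq> {..<K}" "card S = j"
  shows "(\<Sum>i\<in>S. p i) \<le> topsum K p j"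
proof -
  have "finite {S. S \<subseteq> {..<K} \<and> card S = j}"
    by (rule finite_subset[of _ "Pow {..<K}"]) auto
  then show ?thesis unfolding topsum_def using assms by (intro Max_ge) auto
qed

lemma topsum_attained:
  assumes "j \<le> K"
  obtains S where "S \<subseteq> {..<K}" "card S = j" "topsum K p j = (\<Sum>i\<in>S. p i)"
proof -
  have "finite {S. S \<subseteq> {..<K} \<and> card S = j}"
    by (rule finite_subset[of _ "Pow {..<K}"]) auto
  moreover have "{..<j} \<in> {S. S \<subseteq> {..<K} \<and> card S = j}" using assms by auto
  ultimately have "topsum K p j \<in> (\<lambda>S. \<Sum>i\<in>S. p i) ` {S. S \<subseteq> {..<K} \<and> card S = j}"
    unfolding topsum_def by (intro Max_in) blast+
  then show ?thesis using that by auto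
qed

lemma vec_majI:
  assumes "\<And>S. S \<subseteq> {..<max n n'} \<Longrightarrow> (\<Sum>i\<in>S. q i) \<le> topsum (max n n') p (card S)"
  shows "vec_maj n p n' q"
  unfolding vec_maj_def
proof (intro allI impI)
  fix j assume "j \<le> max n n'"
  then obtain S where "S \<subseteq> {..<max n n'}" "card S = j" "topsum (max n n') q j = (\<Sum>i\<in>S. q i)"
    by (rule topsum_attained)
  then show "topsum (max n n') q j \<le> topsum (max n n') p j" using assms by auto
qed

lemma vec_maj_dirac0:
  assumes c: "prob_vec K0 c"
  shows "vec_maj K dirac0 K0 c"
proof (rule vec_majI)
  fix S assume S: "S \<subseteq> {..<max K K0}"
  show "(\<Sum>i\<in>S. c i) \<le> topsum (max K K0) dirac0 (card S)"
  proof (cases "S = {}")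
    case True then show ?thesis using sum_le_topsum[of "{}" "max K K0" 0 dirac0] by simp
  next
    case False
    have "finite S" using S finite_subset by blast
    then have "card S \<ge> 1" using False by (simp add: Suc_le_eq card_gt_0_iff)
    moreover have "(\<Sum>i\<in>S. c i) \<le> (\<Sum>i<max K K0. c i)"
      using S prob_vecD(1)[OF c] by (intro sum_mono2) auto
    moreover have "card S \<le> max K K0" using S card_mono[of "{..<max K K0}" S] by simp
    ultimately show ?thesis
      using sum_le_topsum[of "{..<card S}" "max K K0" "card S" dirac0] prob_vec_sum_pad[OF c, of "max K K0"]
      by (simp add: dirac0_def sum.delta)
  qed
qed

lemma sum_subset_le_threshold:
  assumes c: "prob_vec K0 c" and fin: "finite S" and th: "th \<ge> 0"
    and tail: "(\<Sum>y<K0. if c y > th then c y else 0) \<le> e"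
  shows "(\<Sum>y\<in>S. c y) \<le> real (card S) * th \<or> (\<Sum>y\<in>S. c y) \<le> e + real (card S - 1) * th"
proof -
  define A where "A = {y\<in>S. c y > th}"
  have "A \<subseteq> {..<K0}" unfolding A_def using prob_vecD(3)[OF c] th by (force simp: not_less[symmetric])
  then have "(\<Sum>y\<in>A. if c y > th then c y else 0) \<le> (\<Sum>y<K0. if c y > th then c y else 0)"
    using prob_vecD(1)[OF c] by (intro sum_mono2) auto
  then have heavy: "(\<Sum>y\<in>A. c y) \<le> e" using tail unfolding A_def by simp
  have "(\<Sum>y\<in>S - A. c y) \<le> (\<Sum>y\<in>S - A. th)" unfolding A_def by (intro sum_mono) auto
  then have light: "(\<Sum>y\<in>S - A. c y) \<le> real (card (S - A)) * th" by simp
  have split: "(\<Sum>y\<in>S. c y) = (\<Sum>y\<in>A. c y) + (\<Sum>y\<in>S - A. c y)"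
    using fin by (metis (no_types, lifting) A_def mem_Collect_eq subsetI sum.subset_diff add.commute)
  show ?thesis
  proof (cases "A = {}")
    case False
    then have "card A \<ge> 1" using fin unfolding A_def by (simp add: Suc_le_eq card_gt_0_iff)
    then have "card (S - A) \<le> card S - 1" using fin unfolding A_def by (simp add: card_Diff_subset)
    then have "real (card (S - A)) * th \<le> real (card S - 1) * th" using th by (intro mult_right_mono) auto
    then show ?thesis using split heavy light by simp
  qed (use split light in simp)
qed

text \<open>Heavy entries of \<open>c\<close> contribute at most \<open>e\<close>, matched by the first entry of
  \<open>two_level e L\<close>; each light entry is at most \<open>(1 - e) / L\<close>, matched by one of the others.\<close>

lemma vec_maj_two_level:
  fixes L :: nat
  assumes e: "0 < e" "e < 1" and L: "L \<ge> 1" "L < K" and c: "prob_vec K0 c"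
    and tail: "(\<Sum>y<K0. if c y > (1 - e) / (L + 1) then c y else 0) \<le> e"
  shows "vec_maj K (two_level e L) K0 c"
proof (rule vec_majI)
  define th where "th = (1 - e) / (L + 1)"
  have th: "th \<ge> 0" "th \<le> (1 - e) / L"
    unfolding th_def using e L by (auto intro!: divide_left_mono)
  fix S assume S: "S \<subseteq> {..<max K K0}"
  define j where "j = card S"
  have finS: "finite S" using S finite_subset by blast
  have jM: "j \<le> max K K0" unfolding j_def using S card_mono[of "{..<max K K0}" S] by simp
  have prefix: "(\<Sum>i<j. two_level e L i) = e + real (min (j - 1) L) * ((1 - e) / L)" if "j \<ge> 1"
    using sum_two_level_prefix[of j "\<lambda>x. x" e L] that by simp
  consider "j = 0" | "j \<ge> L + 1" | "1 \<le> j" "j \<le> L" by linarith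
  then have "(\<Sum>i\<in>S. c i) \<le> topsum (max K K0) (two_level e L) j"
  proof cases
    case 1
    then show ?thesis using finS sum_le_topsum[of "{}" "max K K0" 0] unfolding j_def by simp
  next
    case 2
    have "(\<Sum>y\<in>S. c y) \<le> (\<Sum>y<max K K0. c y)"
      using S prob_vecD(1)[OF c] by (intro sum_mono2) auto
    also have "\<dots> = (\<Sum>i<j. two_level e L i)"
      using prob_vec_sum_pad[OF c, of "max K K0"] prefix 2 L by (simp add: min_absorb2)
    also have "\<dots> \<le> topsum (max K K0) (two_level e L) j"
      using jM by (intro sum_le_topsum) auto
    finally show ?thesis .
  next
    case 3
    have "real j * th \<le> real j * ((1 - e) / L)" "real (j - 1) * th \<le> real (j - 1) * ((1 - e) / L)"
      using th(2) by (intro mult_left_mono; simp)+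
    moreover have "real j * ((1 - e) / L) = (\<Sum>i\<in>{1..<Suc j}. two_level e L i)"
      using 3 by (simp add: two_level_def)
    moreover have "e + real (j - 1) * ((1 - e) / L) = (\<Sum>i<j. two_level e L i)"
      using prefix 3 by simp
    moreover have "(\<Sum>i\<in>{1..<Suc j}. two_level e L i) \<le> topsum (max K K0) (two_level e L) j"
      using 3 L by (intro sum_le_topsum) auto
    moreover have "(\<Sum>i<j. two_level e L i) \<le> topsum (max K K0) (two_level e L) j"
      using jM by (intro sum_le_topsum) auto
    ultimately show ?thesis
      using sum_subset_le_threshold[OF c finS th(1) tail[folded th_def]] unfolding j_def by linarith
  qed
  then show "(\<Sum>i\<in>S. c i) \<le> topsum (max K K0) (two_level e L) (card S)" unfolding j_def .
qed

lemma vec_maj_dominating_set: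
  assumes maj: "vec_maj n p n' q" and S: "S \<subseteq> {..<max n n'}"
  obtains S' where "S' \<subseteq> {..<max n n'}" "card S' = card S" "(\<Sum>i\<in>S. q i) \<le> (\<Sum>i\<in>S'. p i)"
proof -
  have j: "card S \<le> max n n'" using S card_mono[of "{..<max n n'}" S] by simp
  obtain S' where "S' \<subseteq> {..<max n n'}" "card S' = card S" "topsum (max n n') p (card S) = (\<Sum>i\<in>S'. p i)"
    using topsum_attained[OF j] by blast
  moreover have "(\<Sum>i\<in>S. q i) \<le> topsum (max n n') p (card S)"
    using sum_le_topsum[OF S refl, of q] maj j unfolding vec_maj_def by (meson order_trans)
  ultimately show ?thesis using that by simp
qed

lemma neg_sum_xlnx_le:
  fixes q :: "nat \<Rightarrow> real"
  assumes fin: "finite S" and q: "\<And>i. q i \<ge> 0"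
  shows "- (\<Sum>i\<in>S. q i * ln (q i)) \<le> 1 + (\<Sum>i\<in>S. q i) * ln (card S)"
proof (cases "S = {}")
  case False
  define a where "a = (\<Sum>i\<in>S. q i)"
  have a: "a \<ge> 0" unfolding a_def using q by (intro sum_nonneg) auto
  have S: "card S > 0" using fin False card_gt_0_iff by blast
  have "a * ln (a / card S) \<le> (\<Sum>i\<in>S. q i * ln (q i / 1))"
    using log_sum_inequality[OF fin, of q "\<lambda>_. 1"] S q unfolding a_def by simp
  moreover have "a * ln (a / card S) = a * ln a - a * ln (card S)"
    using S by (cases "a = 0") (simp_all add: ln_div algebra_simps)
  ultimately show ?thesis using neg_xlnx_le_one[OF a] unfolding a_def by simp
qed simp

lemma entropy_le_of_split:
  fixes q :: "nat \<Rightarrow> real"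
  assumes q: "prob_vec n q" and fin: "finite A" "finite B" and disj: "A \<inter> B = {}"
    and supp: "\<And>i. q i \<noteq> 0 \<Longrightarrow> i \<in> A \<union> B"
    and e: "0 \<le> e" and mass: "(\<Sum>i\<in>A. q i) \<ge> 1 - e"
  shows "entropy n q \<le> log 2 (card A) + e * log 2 (card B) + 4"
proof -
  let ?f = "\<lambda>i. q i * ln (q i)"
  have qnn: "\<And>i. q i \<ge> 0" using prob_vecD(1)[OF q] .
  have "(\<Sum>i<n. ?f i) = (\<Sum>i\<in>{..<n} \<inter> (A \<union> B). ?f i)"
    using supp by (intro sum.mono_neutral_right) auto
  also have "\<dots> = (\<Sum>i\<in>A \<union> B. ?f i)"
    using supp prob_vecD(3)[OF q] fin by (intro sum.mono_neutral_left) (auto, (metis not_le)+)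
  also have "\<dots> = (\<Sum>i\<in>A. ?f i) + (\<Sum>i\<in>B. ?f i)"
    using fin disj by (rule sum.union_disjoint)
  finally have split: "(\<Sum>i<n. ?f i) = (\<Sum>i\<in>A. ?f i) + (\<Sum>i\<in>B. ?f i)" .
  have "(\<Sum>i\<in>A \<union> B. q i) = (\<Sum>i\<in>{..<n} \<inter> (A \<union> B). q i)"
    using supp prob_vecD(3)[OF q] fin by (intro sum.mono_neutral_right) (auto, (metis not_le)+)
  also have "\<dots> \<le> (\<Sum>i<n. q i)"
    using prob_vecD(1)[OF q] by (intro sum_mono2) auto
  finally have "(\<Sum>i\<in>A. q i) + (\<Sum>i\<in>B. q i) \<le> 1"
    using prob_vecD(2)[OF q] fin disj by (simp add: sum.union_disjoint)
  then have mass_A: "(\<Sum>i\<in>A. q i) \<le> 1" and mass_B: "(\<Sum>i\<in>B. q i) \<le> e"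
    using mass prob_vecD(1)[OF q] sum_nonneg[of B q] by auto
  have "ln (card A) \<ge> 0" by (cases "card A = 0") auto
  then have A: "(\<Sum>i\<in>A. q i) * ln (card A) \<le> ln (card A)"
    using mass_A by (simp add: mult_left_le_one_le sum_nonneg prob_vecD(1)[OF q])
  have B: "(\<Sum>i\<in>B. q i) * ln (card B) \<le> e * ln (card B)"
    using mass_B by (cases "card B = 0") (auto intro: mult_right_mono)
  have "- (\<Sum>i<n. ?f i) \<le> 2 + ln (card A) + e * ln (card B)"
    using split A B neg_sum_xlnx_le[of A q, OF fin(1) qnn] neg_sum_xlnx_le[of B q, OF fin(2) qnn]
    by linarith
  moreover have "2 / ln 2 \<le> (4::real)"
    using ln_le_minus_one[of "1/2::real"] by (simp add: ln_div field_simps)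
  ultimately have "- (\<Sum>i<n. ?f i) / ln 2 \<le> ln (card A) / ln 2 + e * ln (card B) / ln 2 + 4"
    by (simp add: field_simps)
  then show ?thesis unfolding entropy_ln log_def by simp
qed

lemma vec_maj_support:
  assumes c: "prob_vec K0 c" and q: "prob_vec n' q" and maj: "vec_maj n' q K0 c"
  obtains S where "S \<subseteq> {..<max n' K0}" "card S = K0" "\<And>i. q i \<noteq> 0 \<Longrightarrow> i \<in> S"
proof -
  define K where "K = max n' K0"
  have "{..<K0} \<subseteq> {..<max n' K0}" by auto
  from vec_maj_dominating_set[OF maj this, folded K_def]
  obtain S where S: "S \<subseteq> {..<K}" "card S = K0" "(\<Sum>y<K0. c y) \<le> (\<Sum>i\<in>S. q i)"
    by (metis card_lessThan)
  have "i \<in> S" if "q i \<noteq> 0" for i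
  proof (rule ccontr)
    assume "i \<notin> S"
    have "i < K" using that prob_vecD(3)[OF q, of i] unfolding K_def by (cases "i < n'") auto
    have fin: "finite S" using S finite_subset by blast
    have "(\<Sum>j\<in>S. q j) + q i = (\<Sum>j\<in>insert i S. q j)"
      using \<open>i \<notin> S\<close> fin by simp
    also have "\<dots> \<le> (\<Sum>j<K. q j)"
      using \<open>i < K\<close> S prob_vecD(1)[OF q] by (intro sum_mono2) auto
    finally show False
      using that S(3) prob_vecD(2)[OF c] prob_vecD(1)[OF q, of i] prob_vec_sum_pad[OF q, of K]
      unfolding K_def by auto
  qed
  then show ?thesis using that S unfolding K_def by blast
qed

text \<open>If \<open>q\<close> majorizes \<open>c\<close>, then \<open>q\<close> lives on \<open>K0\<close> points and puts mass \<open>1 - e\<close> on at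
  most \<open>1 / th\<close> points (compare with the entries of \<open>c\<close> above \<open>th\<close>).\<close>

lemma entropy_le_of_vec_maj:
  assumes c: "prob_vec K0 c" and q: "prob_vec n' q" and maj: "vec_maj n' q K0 c"
    and th: "0 < th" and e: "0 \<le> e" "e < 1"
    and tail: "(\<Sum>y<K0. if c y < th then c y else 0) \<le> e"
  shows "entropy n' q \<le> log 2 (1 / th) + e * log 2 K0 + 4"
proof -
  define T where "T = {y. y < K0 \<and> c y \<ge> th}"
  have "(\<Sum>y<K0. c y) = (\<Sum>y<K0. if c y < th then c y else 0) + (\<Sum>y<K0. if c y < th then 0 else c y)"
    by (subst sum.distrib[symmetric]) (rule sum.cong, auto)
  moreover have "(\<Sum>y<K0. if c y < th then 0 else c y) = (\<Sum>y\<in>T. c y)"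
    unfolding T_def by (rule sum.mono_neutral_cong_right) auto
  ultimately have mass_T: "(\<Sum>y\<in>T. c y) \<ge> 1 - e" using tail prob_vecD(2)[OF c] by simp
  have "real (card T) * th \<le> (\<Sum>y\<in>T. c y)"
    using sum_mono[of T "\<lambda>_. th" c] unfolding T_def by simp
  also have "\<dots> \<le> 1"
    using prob_vecD[OF c] sum_mono2[of "{..<K0}" T c] unfolding T_def by auto
  finally have card_T: "real (card T) \<le> 1 / th" using th by (simp add: field_simps)
  have "T \<subseteq> {..<max n' K0}" unfolding T_def by auto
  from vec_maj_dominating_set[OF maj this]
  obtain S1 where S1: "card S1 = card T" "(\<Sum>y\<in>T. c y) \<le> (\<Sum>i\<in>S1. q i)" "finite S1"
    by (metis finite_lessThan finite_subset)
  obtain S2 where S2: "S2 \<subseteq> {..<max n' K0}" "card S2 = K0" and supp: "\<And>i. q i \<noteq> 0 \<Longrightarrow> i \<in> S2"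
    using vec_maj_support[OF c q maj] by blast
  have fin: "finite S1" "finite (S2 - S1)" using S1(3) S2(1) by (auto intro: finite_subset)
  have "entropy n' q \<le> log 2 (card S1) + e * log 2 (card (S2 - S1)) + 4"
    using supp S1 mass_T by (intro entropy_le_of_split[OF q fin _ _ e(1)]) auto
  also have "log 2 (card S1) \<le> log 2 (1 / th)"
  proof -
    have "T \<noteq> {}" using mass_T e by auto
    then have "card T > 0" unfolding T_def by (simp add: card_gt_0_iff)
    then show ?thesis using card_T S1(1) by (intro log_mono) auto
  qed
  also have "e * log 2 (card (S2 - S1)) \<le> e * log 2 K0"
  proof (cases "card (S2 - S1) = 0")
    case False
    have "finite S2" using S2(1) finite_subset by blast
    then have "card (S2 - S1) \<le> K0" using S2(2) card_mono[of S2 "S2 - S1"] by auto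
    then show ?thesis using False e by (intro mult_left_mono) auto
  qed (use e prob_vec_length_pos[OF c] in \<open>simp add: log_def\<close>)
  finally show ?thesis by simp
qed

lemma powsum_has_real_derivative:
  assumes p: "prob_vec n p"
  shows "((\<lambda>u. \<Sum>y<n. p y powr (1 + u)) has_real_derivative - (entropy n p * ln 2)) (at 0)"
proof -
  have "((\<lambda>u. p y powr (1 + u)) has_real_derivative p y * ln (p y)) (at 0)" for y
  proof (cases "p y = 0")
    case False
    then have "p y > 0" using prob_vecD(1)[OF p, of y] by simp
    then show ?thesis by (auto intro!: derivative_eq_intros)
  qed simp
  then have "((\<lambda>u. \<Sum>y<n. p y powr (1 + u)) has_real_derivative (\<Sum>y<n. p y * ln (p y))) (at 0)"
    by (intro DERIV_sum)
  moreover have "(\<Sum>y<n. p y * ln (p y)) = - (entropy n p * ln 2)" unfolding entropy_ln by simp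
  ultimately show ?thesis by (simp only:)
qed

lemma powsum_one:
  assumes "prob_vec n p" shows "(\<Sum>y<n. p y powr 1) = 1"
  using prob_vecD[OF assms] by simp

text \<open>The derivative at \<open>0\<close> of \<open>u \<mapsto> \<Sum>y. p y powr (1 + u)\<close> is \<open>- H(p) ln 2\<close>, so for small
  \<open>t > 0\<close> these power sums are controlled by the Shannon entropy on either side of \<open>u = 0\<close>.\<close>

lemma powsum_le_entropy_right:
  assumes p: "prob_vec n p" and g: "g > 0"
  shows "eventually (\<lambda>t. (\<Sum>y<n. p y powr (1 + t)) \<le> 2 powr (- (t * (entropy n p - g)))) (at_right 0)"
proof -
  define G where "G = (\<lambda>u. (\<Sum>y<n. p y powr (1 + u)) - 2 powr (- (u * (entropy n p - g))))"
  have "(G has_real_derivative - (entropy n p * ln 2) - (- (entropy n p - g) * ln 2)) (at 0)"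
    unfolding G_def
    by (rule DERIV_diff[OF powsum_has_real_derivative[OF p]]) (auto intro!: derivative_eq_intros)
  moreover have "- (entropy n p * ln 2) - (- (entropy n p - g) * ln 2) < 0" using g by (simp add: algebra_simps)
  ultimately obtain d where "d > 0" "\<And>h. h > 0 \<Longrightarrow> h < d \<Longrightarrow> G (0 + h) < G 0"
    using DERIV_neg_dec_right by blast
  moreover have "G 0 = 0" unfolding G_def using powsum_one[OF p] by simp
  ultimately show ?thesis unfolding eventually_at_right_field G_def by force
qed

lemma powsum_le_entropy_left:
  assumes p: "prob_vec n p" and g: "g > 0"
  shows "eventually (\<lambda>t. (\<Sum>y<n. p y powr (1 - t)) \<le> 2 powr (t * (entropy n p + g))) (at_right 0)"
proof -
  define G where "G = (\<lambda>u. (\<Sum>y<n. p y powr (1 + u)) - 2 powr (- (u * (entropy n p + g))))"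
  have "(G has_real_derivative - (entropy n p * ln 2) - (- (entropy n p + g) * ln 2)) (at 0)"
    unfolding G_def
    by (rule DERIV_diff[OF powsum_has_real_derivative[OF p]]) (auto intro!: derivative_eq_intros)
  moreover have "- (entropy n p * ln 2) - (- (entropy n p + g) * ln 2) > 0" using g by (simp add: algebra_simps)
  ultimately obtain d where "d > 0" "\<And>h. h > 0 \<Longrightarrow> h < d \<Longrightarrow> G (0 - h) < G 0"
    using DERIV_pos_inc_left by blast
  moreover have "G 0 = 0" unfolding G_def using powsum_one[OF p] by simp
  ultimately show ?thesis unfolding eventually_at_right_field G_def by force
qed

lemma heavy_mass_le_powsum:
  fixes c :: "nat \<Rightarrow> real"
  assumes c: "\<And>y. c y \<ge> 0" and th: "th > 0" and t: "t > 0"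
  shows "(\<Sum>y<K. if c y > th then c y else 0) \<le> th powr (- t) * (\<Sum>y<K. c y powr (1 + t))"
  unfolding sum_distrib_left
proof (intro sum_mono)
  fix y
  show "(if c y > th then c y else 0) \<le> th powr (- t) * c y powr (1 + t)"
  proof (cases "c y > th")
    case True
    have "c y * 1 \<le> c y * (c y / th) powr t"
      using True th t by (intro mult_left_mono ge_one_powr_ge_zero) auto
    also have "\<dots> = th powr (- t) * c y powr (1 + t)"
      using True th by (simp add: powr_divide powr_add powr_minus field_simps)
    finally show ?thesis using True by simp
  qed (use c in simp)
qed

lemma light_mass_le_powsum:
  fixes c :: "nat \<Rightarrow> real"
  assumes c: "\<And>y. c y \<ge> 0" and t: "t > 0"
  shows "(\<Sum>y<K. if c y < th then c y else 0) \<le> th powr t * (\<Sum>y<K. c y powr (1 - t))"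
  unfolding sum_distrib_left
proof (intro sum_mono)
  fix y
  show "(if c y < th then c y else 0) \<le> th powr t * c y powr (1 - t)"
  proof (cases "c y < th \<and> c y > 0")
    case True
    have "c y = c y powr t * c y powr (1 - t)" using True by (simp add: powr_add[symmetric])
    also have "\<dots> \<le> th powr t * c y powr (1 - t)"
      using True t by (intro mult_right_mono powr_mono2) auto
    finally show ?thesis using True by simp
  qed (use c[of y] in auto)
qed

lemma eventually_powr_decay_le:
  assumes "a > 0" "e > 0"
  shows "eventually (\<lambda>k. B * 2 powr (- (a * real k)) \<le> e) sequentially"
proof -
  have "2 powr (- a) < 2 powr 0" using assms by (intro powr_less_mono) auto
  then have "(\<lambda>k. B * (2 powr (- a)) ^ k) \<longlonglongrightarrow> B * 0"
    by (intro tendsto_mult tendsto_const LIMSEQ_power_zero) auto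
  then have "eventually (\<lambda>k. B * (2 powr (- a)) ^ k < e) sequentially"
    using assms by (intro order_tendstoD) auto
  moreover have "(2 powr (- a)) ^ k = 2 powr (- (a * real k))" for k
    by (simp add: powr_realpow[symmetric] powr_powr)
  ultimately show ?thesis by (auto elim: eventually_mono)
qed

definition vec_maj_columns :: "nat \<Rightarrow> (nat \<Rightarrow> real) \<Rightarrow> chan \<Rightarrow> bool" where
  "vec_maj_columns n' q C = (case C of (m, n, W) \<Rightarrow> \<forall>x<m. vec_maj n' q n (\<lambda>y. W y x))"

lemma Hmin_eq: "Hmin C = Sup {entropy n' q | n' q. prob_vec n' q \<and> vec_maj_columns n' q C}"
  unfolding Hmin_def vec_maj_columns_def by (simp add: case_prod_beta)

lemma dirac0_majorizes:
  assumes chan: "is_channel (M, K0, Wc)"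
  shows "chan_maj (vec_chan (K0 + 1) dirac0) (M, K0, Wc) \<and> vec_maj_columns (K0 + 1) dirac0 (M, K0, Wc)"
proof
  show "chan_maj (vec_chan (K0 + 1) dirac0) (M, K0, Wc)"
  proof (rule chan_maj_vec_chanI)
    fix z assume "z < M"
    then show "\<exists>D. doubly_stochastic (max (K0 + 1) K0) D
      \<and> (\<forall>y<max (K0 + 1) K0. Wc y z = (\<Sum>y0<max (K0 + 1) K0. D y y0 * dirac0 y0))"
      using dirac0_doubly_stochastic[OF prob_vec_column[OF chan], of z "K0 + 1"] by simp
  qed (use is_channelD(1)[OF chan] in simp)
  show "vec_maj_columns (K0 + 1) dirac0 (M, K0, Wc)"
    unfolding vec_maj_columns_def using vec_maj_dirac0[OF prob_vec_column[OF chan]] by simp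
qed

lemma two_level_majorizes:
  fixes L :: nat
  assumes chan: "is_channel (M, K0, Wc)" and e: "0 < e" "e < 1" and L: "L \<ge> 1"
    and tail: "\<And>z. z < M \<Longrightarrow> (\<Sum>y<K0. if Wc y z > (1 - e) / (L + 1) then Wc y z else 0) \<le> e"
  shows "chan_maj (vec_chan (L + 2 + K0) (two_level e L)) (M, K0, Wc)
    \<and> vec_maj_columns (L + 2 + K0) (two_level e L) (M, K0, Wc)"
proof
  show "chan_maj (vec_chan (L + 2 + K0) (two_level e L)) (M, K0, Wc)"
  proof (rule chan_maj_vec_chanI)
    fix z assume z: "z < M"
    show "\<exists>D. doubly_stochastic (max (L + 2 + K0) K0) D
      \<and> (\<forall>y<max (L + 2 + K0) K0. Wc y z = (\<Sum>y0<max (L + 2 + K0) K0. D y y0 * two_level e L y0))"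
      using two_level_doubly_stochastic[OF e L _ prob_vec_column[OF chan z] _ tail[OF z], of "L + 2 + K0"]
      by (simp add: max_absorb1)
  qed (use is_channelD(1)[OF chan] in simp)
  show "vec_maj_columns (L + 2 + K0) (two_level e L) (M, K0, Wc)"
    unfolding vec_maj_columns_def
    using vec_maj_two_level[OF e L _ prob_vec_column[OF chan] tail] by simp
qed

lemma tendsto_div_of_linear_bounds:
  fixes f :: "nat \<Rightarrow> real"
  assumes bounds: "\<And>\<delta>. \<delta> > 0 \<Longrightarrow>
    eventually (\<lambda>k. real k * (h - \<delta>) - A \<le> f k \<and> f k \<le> real k * (h + \<delta>) + A) sequentially"
  shows "(\<lambda>k. f k / real k) \<longlonglongrightarrow> h"
proof (rule order_tendstoI)
  have small: "eventually (\<lambda>k. \<bar>A\<bar> / real k < \<delta> \<and> k \<ge> 1) sequentially" if "\<delta> > 0" for \<delta>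
    using eventually_conj[OF order_tendstoD(2)[OF lim_const_over_n[of "\<bar>A\<bar>"] that] eventually_ge_at_top[of 1]]
    by simp
  have close: "eventually (\<lambda>k. h - \<delta> < f k / real k \<and> f k / real k < h + \<delta>) sequentially" if "\<delta> > 0" for \<delta>
  proof (rule eventually_mono[OF eventually_conj[OF bounds small]])
    show "\<delta> / 2 > 0" "\<delta> / 2 > 0" using that by simp_all
    fix k assume k: "(real k * (h - \<delta> / 2) - A \<le> f k \<and> f k \<le> real k * (h + \<delta> / 2) + A)
      \<and> \<bar>A\<bar> / real k < \<delta> / 2 \<and> k \<ge> 1"
    then have pos: "real k > 0" by simp
    have "(real k * (h - \<delta> / 2) - \<bar>A\<bar>) / real k \<le> f k / real k"
      using k pos by (intro divide_right_mono) auto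
    moreover have "f k / real k \<le> (real k * (h + \<delta> / 2) + \<bar>A\<bar>) / real k"
      using k pos by (intro divide_right_mono) auto
    ultimately have "h - \<delta> / 2 - \<bar>A\<bar> / real k \<le> f k / real k" "f k / real k \<le> h + \<delta> / 2 + \<bar>A\<bar> / real k"
      using pos by (simp_all add: diff_divide_distrib add_divide_distrib)
    then show "h - \<delta> < f k / real k \<and> f k / real k < h + \<delta>" using k by linarith
  qed
  show "eventually (\<lambda>k. a < f k / real k) sequentially" if "a < h" for a
    using close[of "h - a"] that by (auto elim: eventually_mono)
  show "eventually (\<lambda>k. f k / real k < a) sequentially" if "a > h" for a
    using close[of "a - h"] that by (auto elim: eventually_mono)
qed

lemma nat_floor_bounds:
  fixes x :: real assumes "x \<ge> 1"
  shows "x / 2 \<le> real (nat \<lfloor>x\<rfloor>)" "real (nat \<lfloor>x\<rfloor>) \<le> x" "nat \<lfloor>x\<rfloor> \<ge> 1"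
proof -
  have "\<lfloor>x\<rfloor> \<ge> 1" using assms by linarith
  then have eq: "real (nat \<lfloor>x\<rfloor>) = real_of_int \<lfloor>x\<rfloor>" by simp
  have "real_of_int \<lfloor>x\<rfloor> > x - 1" "real_of_int \<lfloor>x\<rfloor> \<ge> 1"
    using \<open>\<lfloor>x\<rfloor> \<ge> 1\<close> by linarith+
  then show "x / 2 \<le> real (nat \<lfloor>x\<rfloor>)" unfolding eq by linarith
  show "real (nat \<lfloor>x\<rfloor>) \<le> x" unfolding eq by linarith
  show "nat \<lfloor>x\<rfloor> \<ge> 1" using \<open>\<lfloor>x\<rfloor> \<ge> 1\<close> by linarith
qed

lemma heavy_mass_tpow_column_le:
  assumes chan: "is_channel (m, n, W)" and t: "t > 0" and th: "th > 0" and rho: "rho \<ge> 0"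
    and base: "\<And>x. x < m \<Longrightarrow> (\<Sum>y<n. W y x powr (1 + t)) \<le> rho" and z: "z < m^k"
  shows "(\<Sum>y<n^k. if chan_mat (tpow (m, n, W) k) y z > th then chan_mat (tpow (m, n, W) k) y z else 0)
    \<le> th powr (- t) * rho ^ k"
proof -
  have "(\<Sum>y<n^k. if chan_mat (tpow (m, n, W) k) y z > th then chan_mat (tpow (m, n, W) k) y z else 0)
      \<le> th powr (- t) * (\<Sum>y<n^k. chan_mat (tpow (m, n, W) k) y z powr (1 + t))"
    using is_channel_nonneg[OF is_channel_chan_mat_tpow[OF chan]] th t by (rule heavy_mass_le_powsum)
  also have "\<dots> \<le> th powr (- t) * rho ^ k"
    using powsum_tpow_column_le[OF chan rho base z] by (intro mult_left_mono) auto
  finally show ?thesis .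
qed

text \<open>With \<open>L \<approx> 2^(k a)\<close>, the heavy entries of every column of \<open>N^\<otimes>k\<close>, i.e. those above
  \<open>\<approx> 2^(-k a)\<close>, carry mass at most \<open>e\<close> as soon as the Renyi power sums decay like
  \<open>2^(-t b k)\<close> with \<open>b > a\<close>.\<close>

lemma two_level_witness_tpow:
  assumes chan: "is_channel (m, n, W)" and t: "t > 0" and e: "0 < e" "e \<le> 1/2" and a: "a \<ge> 0"
    and base: "\<And>x. x < m \<Longrightarrow> (\<Sum>y<n. W y x powr (1 + t)) \<le> 2 powr (- (t * b))"
    and small: "4 powr t * 2 powr (- (t * (b - a) * real k)) \<le> e"
  shows "\<exists>n' q. prob_vec n' q \<and> chan_maj (vec_chan n' q) (tpow (m, n, W) k)
    \<and> vec_maj_columns n' q (tpow (m, n, W) k) \<and> (1 - e) * (real k * a - 1) \<le> entropy n' q"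
proof -
  define X where "X = 2 powr (real k * a)"
  have X: "X \<ge> 1" unfolding X_def using a by (intro ge_one_powr_ge_zero) auto
  define L where "L = nat \<lfloor>X\<rfloor>"
  have L: "X / 2 \<le> real L" "real L \<le> X" "L \<ge> 1" unfolding L_def using nat_floor_bounds[OF X] by auto
  have tail: "(\<Sum>y<n^k. if chan_mat (tpow (m, n, W) k) y z > (1 - e) / (L + 1)
      then chan_mat (tpow (m, n, W) k) y z else 0) \<le> e" if z: "z < m^k" for z
  proof -
    have "((1 - e) / (L + 1)) powr (- t) = ((L + 1) / (1 - e)) powr t"
      using e by (simp add: powr_minus_divide powr_divide)
    also have "\<dots> \<le> (4 * X) powr t"
    proof (rule powr_mono2)
      have "(L + 1) / (1 - e) \<le> (L + 1) / (1 / 2)" using e by (intro divide_left_mono) auto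
      then show "(L + 1) / (1 - e) \<le> 4 * X" using L X by simp
    qed (use t e in auto)
    finally have th: "((1 - e) / (L + 1)) powr (- t) \<le> 4 powr t * 2 powr (t * a * real k)"
      unfolding X_def by (simp add: powr_mult powr_powr mult_ac)
    have "(2 powr (- (t * b))) ^ k = 2 powr (- (t * b * real k))"
      by (simp add: powr_realpow[symmetric] powr_powr)
    moreover have "2 powr (t * a * real k) * 2 powr (- (t * b * real k)) = 2 powr (- (t * (b - a) * real k))"
      by (simp add: powr_add[symmetric] algebra_simps)
    ultimately have "((1 - e) / (L + 1)) powr (- t) * (2 powr (- (t * b))) ^ k
        \<le> 4 powr t * 2 powr (- (t * (b - a) * real k))"
      using mult_right_mono[OF th, of "(2 powr (- (t * b))) ^ k"] by (simp add: mult.assoc)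
    then show ?thesis
      using heavy_mass_tpow_column_le[OF chan t _ _ base z, of "(1 - e) / (L + 1)"] e small by simp
  qed
  have "(1 - e) * (real k * a - 1) \<le> (1 - e) * log 2 L"
  proof (intro mult_left_mono)
    have "real k * a - 1 = log 2 (X / 2)" unfolding X_def by (simp add: log_divide)
    also have "\<dots> \<le> log 2 L" using L X by (intro log_mono) auto
    finally show "real k * a - 1 \<le> log 2 L" .
  qed (use e in simp)
  also have "\<dots> \<le> entropy (L + 2 + n^k) (two_level e L)"
    using e L by (intro entropy_two_level_ge) auto
  finally show ?thesis
    using two_level_majorizes[OF is_channel_chan_mat_tpow[OF chan] e(1) _ L(3) tail] prob_vec_two_level[of e L "L + 2 + n^k"] e L
    by (subst (1 2) tpow_eq) auto
qed

lemma exists_small_weight: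
  fixes c \<delta> :: real
  assumes "c \<ge> 0" "\<delta> > 0"
  obtains e where "0 < e" "e \<le> 1/2" "e * (c + 1) \<le> \<delta> / 2"
proof
  define e where "e = min (1/2) (\<delta> / (2 * (c + 1)))"
  show "0 < e" unfolding e_def using assms by simp
  show "e \<le> 1/2" unfolding e_def by (rule min.cobounded1)
  have "e * (c + 1) \<le> \<delta> / (2 * (c + 1)) * (c + 1)"
    unfolding e_def using assms by (intro mult_right_mono) auto
  also have "\<dots> = \<delta> / 2" using assms by (simp add: field_simps)
  finally show "e * (c + 1) \<le> \<delta> / 2" .
qed

lemma powsum_le_entropy_right_uniform:
  assumes chan: "is_channel (m, n, W)" and h: "\<And>x. x < m \<Longrightarrow> h \<le> entropy n (\<lambda>y. W y x)"
    and g: "g > 0"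
  obtains t where "t > 0" "\<And>x. x < m \<Longrightarrow> (\<Sum>y<n. W y x powr (1 + t)) \<le> 2 powr (- (t * (h - g)))"
proof -
  have "eventually (\<lambda>t. \<forall>x\<in>{..<m}. (\<Sum>y<n. W y x powr (1 + t)) \<le> 2 powr (- (t * (h - g)))) (at_right 0)"
  proof (intro eventually_ball_finite ballI)
    fix x assume "x \<in> {..<m}"
    then show "eventually (\<lambda>t. (\<Sum>y<n. W y x powr (1 + t)) \<le> 2 powr (- (t * (h - g)))) (at_right 0)"
      using powsum_le_entropy_right[OF prob_vec_column[OF chan], of x g] eventually_at_right_less[of 0] g h
      by (auto elim!: eventually_elim2 intro: order_trans mult_left_mono)
  qed simp
  then have "\<exists>t. 0 < t \<and> (\<forall>x\<in>{..<m}. (\<Sum>y<n. W y x powr (1 + t)) \<le> 2 powr (- (t * (h - g))))"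
    by (intro eventually_happens'[OF trivial_limit_at_right_real] eventually_conj)
      (simp_all add: eventually_at_right_less)
  then show ?thesis using that by auto
qed

lemma eventually_majorizing_vec_entropy_ge:
  assumes chan: "is_channel (m, n, W)" and h: "h \<ge> 0" "\<And>x. x < m \<Longrightarrow> h \<le> entropy n (\<lambda>y. W y x)"
    and \<delta>: "\<delta> > 0"
  shows "eventually (\<lambda>k. \<exists>n' q. prob_vec n' q \<and> chan_maj (vec_chan n' q) (tpow (m, n, W) k)
    \<and> vec_maj_columns n' q (tpow (m, n, W) k) \<and> real k * (h - \<delta>) - 1 \<le> entropy n' q) sequentially"
proof (cases "h \<le> \<delta>")
  case True
  have "prob_vec (n^k + 1) dirac0 \<and> chan_maj (vec_chan (n^k + 1) dirac0) (tpow (m, n, W) k)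
    \<and> vec_maj_columns (n^k + 1) dirac0 (tpow (m, n, W) k) \<and> real k * (h - \<delta>) - 1 \<le> entropy (n^k + 1) dirac0" for k
    using mult_nonneg_nonpos[of "real k" "h - \<delta>"] True dirac0_majorizes[OF is_channel_chan_mat_tpow[OF chan, of k]]
      prob_vec_dirac0[of "n^k + 1"]
    by (subst (1 2) tpow_eq) (auto simp: entropy_dirac0)
  then show ?thesis by (intro always_eventually) blast
next
  case False
  obtain t where t: "t > 0"
    and base: "\<And>x. x < m \<Longrightarrow> (\<Sum>y<n. W y x powr (1 + t)) \<le> 2 powr (- (t * (h - \<delta> / 4)))"
    using powsum_le_entropy_right_uniform[OF chan h(2), of "\<delta> / 4"] \<delta> by auto
  obtain e where e: "0 < e" "e \<le> 1/2" "e * (h + 1) \<le> \<delta> / 2"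
    using exists_small_weight[OF h(1) \<delta>] .
  have "eventually (\<lambda>k. 4 powr t * 2 powr (- ((t * \<delta> / 4) * real k)) \<le> e) sequentially"
    using t \<delta> e by (intro eventually_powr_decay_le) auto
  then show ?thesis
  proof (rule eventually_mono)
    fix k assume small: "4 powr t * 2 powr (- ((t * \<delta> / 4) * real k)) \<le> e"
    have "4 powr t * 2 powr (- (t * ((h - \<delta> / 4) - (h - \<delta> / 2)) * real k)) \<le> e"
      using small by (simp add: algebra_simps)
    moreover have "0 \<le> h - \<delta> / 2" using False \<delta> by simp
    ultimately obtain n' q where witness: "prob_vec n' q" "chan_maj (vec_chan n' q) (tpow (m, n, W) k)"
      "vec_maj_columns n' q (tpow (m, n, W) k)" "(1 - e) * (real k * (h - \<delta> / 2) - 1) \<le> entropy n' q"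
      using two_level_witness_tpow[OF chan t e(1,2) _ base] by blast
    have "e * (h - \<delta> / 2) \<le> e * (h + 1)" using e \<delta> by (intro mult_left_mono) auto
    then have "real k * (e * (h - \<delta> / 2)) \<le> real k * (\<delta> / 2)"
      using e(3) by (intro mult_left_mono) (linarith, simp)
    moreover have "(1 - e) * (real k * (h - \<delta> / 2) - 1)
        = real k * (h - \<delta> / 2) - 1 - real k * (e * (h - \<delta> / 2)) + e"
      by (simp add: field_simps)
    ultimately have "real k * (h - \<delta>) - 1 \<le> (1 - e) * (real k * (h - \<delta> / 2) - 1)"
      using e by (simp add: right_diff_distrib)
    then show "\<exists>n' q. prob_vec n' q \<and> chan_maj (vec_chan n' q) (tpow (m, n, W) k)
      \<and> vec_maj_columns n' q (tpow (m, n, W) k) \<and> real k * (h - \<delta>) - 1 \<le> entropy n' q"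
      using witness by force
  qed
qed

lemma entropy_le_of_vec_maj_columns_tpow:
  assumes chan: "is_channel (m, n, W)" and x0: "x0 < m" and t: "t > 0" and e: "0 \<le> e" "e < 1"
    and base: "(\<Sum>y<n. W y x0 powr (1 - t)) \<le> 2 powr (t * b)"
    and small: "2 powr (- (t * (a - b) * real k)) \<le> e"
    and q: "prob_vec n' q" and maj: "vec_maj_columns n' q (tpow (m, n, W) k)"
  shows "entropy n' q \<le> real k * a + e * (real k * log 2 n) + 4"
proof -
  define x where "x = diag_index m x0 k"
  have x: "x < m^k" unfolding x_def by (rule diag_index_less[OF x0])
  define c where "c = (\<lambda>y. chan_mat (tpow (m, n, W) k) y x)"
  define th where "th = 2 powr (- (real k * a))"
  have "(\<Sum>y<n^k. if c y < th then c y else 0) \<le> th powr t * (\<Sum>y<n^k. c y powr (1 - t))"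
    using is_channel_nonneg[OF is_channel_chan_mat_tpow[OF chan]] t unfolding c_def
    by (intro light_mass_le_powsum)
  also have "\<dots> \<le> th powr t * (2 powr (t * b)) ^ k"
    unfolding c_def x_def powsum_tpow_diag_column[OF chan x0]
    using base by (intro mult_left_mono power_mono) (auto intro: sum_nonneg)
  also have "\<dots> = 2 powr (- (t * (a - b) * real k))"
    unfolding th_def by (simp add: powr_powr powr_realpow[symmetric] powr_add[symmetric] algebra_simps)
  finally have tail: "(\<Sum>y<n^k. if c y < th then c y else 0) \<le> e" using small by simp
  have "vec_maj_columns n' q (m^k, n^k, chan_mat (tpow (m, n, W) k))"
    using maj by (simp only: tpow_eq[symmetric])
  then have "vec_maj n' q (n^k) c" using x unfolding vec_maj_columns_def c_def by simp
  then have "entropy n' q \<le> log 2 (1 / th) + e * log 2 (real (n^k)) + 4"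
    using prob_vec_column[OF is_channel_chan_mat_tpow[OF chan] x] e tail unfolding c_def
    by (intro entropy_le_of_vec_maj[OF _ q]) (auto simp: th_def)
  also have "\<dots> = real k * a + e * (real k * log 2 n) + 4"
    using is_channel_outputs_pos[OF chan] unfolding th_def
    by (simp add: log_nat_power powr_minus_divide[symmetric])
  finally show ?thesis .
qed

lemma eventually_vec_maj_columns_entropy_le:
  assumes chan: "is_channel (m, n, W)" and x0: "x0 < m" and \<delta>: "\<delta> > 0"
  defines "h \<equiv> entropy n (\<lambda>y. W y x0)"
  shows "eventually (\<lambda>k. \<forall>n' q. prob_vec n' q \<longrightarrow> vec_maj_columns n' q (tpow (m, n, W) k)
    \<longrightarrow> entropy n' q \<le> real k * (h + \<delta>) + 4) sequentially"
proof -
  have "\<exists>t. 0 < t \<and> (\<Sum>y<n. W y x0 powr (1 - t)) \<le> 2 powr (t * (h + \<delta> / 4))"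
    using powsum_le_entropy_left[OF prob_vec_column[OF chan x0], of "\<delta> / 4"] \<delta> unfolding h_def
    by (intro eventually_happens'[OF trivial_limit_at_right_real] eventually_conj)
      (simp_all add: eventually_at_right_less)
  then obtain t where t: "t > 0" and base: "(\<Sum>y<n. W y x0 powr (1 - t)) \<le> 2 powr (t * (h + \<delta> / 4))"
    by blast
  have log_n: "log 2 n \<ge> 0" using is_channel_outputs_pos[OF chan] by simp
  obtain e where "0 < e" "e \<le> 1/2" "e * (log 2 n + 1) \<le> \<delta> / 2"
    using exists_small_weight[OF log_n \<delta>] .
  then have e: "0 \<le> e" "e < 1" "e * log 2 n \<le> \<delta> / 2" by (auto simp: algebra_simps)
  have "eventually (\<lambda>k. 1 * 2 powr (- ((t * \<delta> / 4) * real k)) \<le> e) sequentially"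
    using t \<delta> \<open>e > 0\<close> by (intro eventually_powr_decay_le) auto
  then show ?thesis
  proof (rule eventually_mono, intro allI impI)
    fix k n' q
    assume "1 * 2 powr (- ((t * \<delta> / 4) * real k)) \<le> e"
    then have small: "2 powr (- (t * ((h + \<delta> / 2) - (h + \<delta> / 4)) * real k)) \<le> e"
      by (simp add: algebra_simps)
    assume "prob_vec n' q" "vec_maj_columns n' q (tpow (m, n, W) k)"
    then have "entropy n' q \<le> real k * (h + \<delta> / 2) + e * (real k * log 2 n) + 4"
      using entropy_le_of_vec_maj_columns_tpow[OF chan x0 t e(1,2) base small] by blast
    also have "\<dots> \<le> real k * (h + \<delta>) + 4"
      using mult_left_mono[OF e(3), of "real k"] by (simp add: algebra_simps)
    finally show "entropy n' q \<le> real k * (h + \<delta>) + 4" .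
  qed
qed

lemma Hmin_tpow_div_tendsto:
  assumes chan: "is_channel (m, n, W)" and x0: "x0 < m"
    and min: "\<And>x. x < m \<Longrightarrow> entropy n (\<lambda>y. W y x0) \<le> entropy n (\<lambda>y. W y x)"
  shows "(\<lambda>k. Hmin (tpow (m, n, W) k) / real k) \<longlonglongrightarrow> entropy n (\<lambda>y. W y x0)"
proof (rule tendsto_div_of_linear_bounds[where A = 4])
  fix \<delta> :: real assume \<delta>: "\<delta> > 0"
  define h where "h = entropy n (\<lambda>y. W y x0)"
  have h0: "h \<ge> 0" unfolding h_def by (rule entropy_nonneg[OF prob_vec_column[OF chan x0]])
  show "eventually (\<lambda>k. real k * (h - \<delta>) - 4 \<le> Hmin (tpow (m, n, W) k)
      \<and> Hmin (tpow (m, n, W) k) \<le> real k * (h + \<delta>) + 4) sequentially"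
    using eventually_conj[OF eventually_majorizing_vec_entropy_ge[OF chan h0 min[folded h_def] \<delta>]
      eventually_vec_maj_columns_entropy_le[OF chan x0 \<delta>, folded h_def]]
  proof (rule eventually_mono)
    fix k
    define Y where "Y = {entropy n' q | n' q. prob_vec n' q \<and> vec_maj_columns n' q (tpow (m, n, W) k)}"
    assume "(\<exists>n' q. prob_vec n' q \<and> chan_maj (vec_chan n' q) (tpow (m, n, W) k)
        \<and> vec_maj_columns n' q (tpow (m, n, W) k) \<and> real k * (h - \<delta>) - 1 \<le> entropy n' q)
      \<and> (\<forall>n' q. prob_vec n' q \<longrightarrow> vec_maj_columns n' q (tpow (m, n, W) k)
        \<longrightarrow> entropy n' q \<le> real k * (h + \<delta>) + 4)"
    then obtain y where y: "y \<in> Y" "real k * (h - \<delta>) - 1 \<le> y"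
      and upper: "\<And>y. y \<in> Y \<Longrightarrow> y \<le> real k * (h + \<delta>) + 4"
      unfolding Y_def by blast
    have "bdd_above Y" using upper by (intro bdd_aboveI) blast
    then have "y \<le> Sup Y" using y by (intro cSup_upper)
    moreover have "Sup Y \<le> real k * (h + \<delta>) + 4" using y upper by (intro cSup_least) auto
    ultimately show "real k * (h - \<delta>) - 4 \<le> Hmin (tpow (m, n, W) k)
        \<and> Hmin (tpow (m, n, W) k) \<le> real k * (h + \<delta>) + 4"
      using y unfolding Hmin_eq Y_def[symmetric] by simp
  qed
qed

lemma monotone_additive_eq_min_entropy:
  fixes HH :: "chan \<Rightarrow> real"
  assumes mono: "\<And>C1 C2. is_channel C1 \<Longrightarrow> is_channel C2 \<Longrightarrow> chan_maj C1 C2 \<Longrightarrow> HH C1 \<le> HH C2"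
    and additive: "\<And>C1 C2. is_channel C1 \<Longrightarrow> is_channel C2 \<Longrightarrow> HH (tensor C1 C2) = HH C1 + HH C2"
    and norm: "\<And>k p. prob_vec k p \<Longrightarrow> HH (vec_chan k p) = entropy k p"
    and chan: "is_channel (m, n, W)" and x0: "x0 < m"
    and min: "\<And>x. x < m \<Longrightarrow> entropy n (\<lambda>y. W y x0) \<le> entropy n (\<lambda>y. W y x)"
  shows "HH (m, n, W) = entropy n (\<lambda>y. W y x0)"
proof -
  define h where "h = entropy n (\<lambda>y. W y x0)"
  have h0: "h \<ge> 0" unfolding h_def by (rule entropy_nonneg[OF prob_vec_column[OF chan x0]])
  have upper: "HH (m, n, W) \<le> h"
    using mono[OF chan is_channel_vec_chan chan_maj_column[OF chan x0]] norm prob_vec_column[OF chan x0]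
    unfolding h_def by simp
  have "(\<lambda>k. real k * HH (m, n, W) / real k) \<longlonglongrightarrow> h"
  proof (rule tendsto_div_of_linear_bounds[where A = 1])
    fix \<delta> :: real assume \<delta>: "\<delta> > 0"
    show "eventually (\<lambda>k. real k * (h - \<delta>) - 1 \<le> real k * HH (m, n, W)
        \<and> real k * HH (m, n, W) \<le> real k * (h + \<delta>) + 1) sequentially"
      using eventually_majorizing_vec_entropy_ge[OF chan h0 min[folded h_def] \<delta>]
    proof (rule eventually_mono)
      fix k assume "\<exists>n' q. prob_vec n' q \<and> chan_maj (vec_chan n' q) (tpow (m, n, W) k)
        \<and> vec_maj_columns n' q (tpow (m, n, W) k) \<and> real k * (h - \<delta>) - 1 \<le> entropy n' q"
      then obtain n' q where "prob_vec n' q" "chan_maj (vec_chan n' q) (tpow (m, n, W) k)"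
        "real k * (h - \<delta>) - 1 \<le> entropy n' q" by blast
      then have "real k * (h - \<delta>) - 1 \<le> HH (tpow (m, n, W) k)"
        using mono[OF is_channel_vec_chan is_channel_tpow[OF chan]] norm by fastforce
      moreover have "real k * HH (m, n, W) \<le> real k * (h + \<delta>)"
        using upper \<delta> by (intro mult_left_mono) auto
      ultimately show "real k * (h - \<delta>) - 1 \<le> real k * HH (m, n, W)
          \<and> real k * HH (m, n, W) \<le> real k * (h + \<delta>) + 1"
        using additive_tpow[OF additive norm chan] by simp
    qed
  qed
  from LIMSEQ_Suc[OF this] have "(\<lambda>k. HH (m, n, W)) \<longlonglongrightarrow> h" by simp
  then show ?thesis unfolding h_def using LIMSEQ_const_iff by blast
qed

lemma Hmax_eq_min_entropy:
  assumes chan: "is_channel (m, n, W)" and x0: "x0 < m"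
    and min: "\<And>x. x < m \<Longrightarrow> entropy n (\<lambda>y. W y x0) \<le> entropy n (\<lambda>y. W y x)"
  shows "Hmax (m, n, W) = entropy n (\<lambda>y. W y x0)"
  unfolding Hmax_def
proof (rule cInf_eq_minimum)
  show "entropy n (\<lambda>y. W y x0) \<in> {entropy n' q |n' q. prob_vec n' q \<and> chan_maj (m, n, W) (vec_chan n' q)}"
    using prob_vec_column[OF chan x0] chan_maj_column[OF chan x0] by blast
qed (use entropy_ge_of_chan_maj[OF chan _ _ min] in blast)

theorem theorem20:
  fixes HH :: "chan \<Rightarrow> real"
    and m n :: nat and W :: "nat \<Rightarrow> nat \<Rightarrow> real"
  assumes mono: "\<And>C1 C2. is_channel C1 \<Longrightarrow> is_channel C2 \<Longrightarrow> chan_maj C1 C2 \<Longrightarrow> HH C1 \<le> HH C2"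
    and additive: "\<And>C1 C2. is_channel C1 \<Longrightarrow> is_channel C2 \<Longrightarrow> HH (tensor C1 C2) = HH C1 + HH C2"
    and norm: "\<And>k p. prob_vec k p \<Longrightarrow> HH (vec_chan k p) = entropy k p"
    and chan: "is_channel (m, n, W)"
  shows "HH (m, n, W) = Min ((\<lambda>x. entropy n (\<lambda>y. W y x)) ` {..<m})
       \<and> (\<lambda>k. Hmin (tpow (m, n, W) (Suc k)) / real (Suc k))
            \<longlonglongrightarrow> Min ((\<lambda>x. entropy n (\<lambda>y. W y x)) ` {..<m})
       \<and> Hmax (m, n, W) = Min ((\<lambda>x. entropy n (\<lambda>y. W y x)) ` {..<m})"
proof -
  have "0 \<in> {..<m}" using is_channelD(1)[OF chan] by simp
  then have "{..<m} \<noteq> {}" by blast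
  then obtain x0 where x0: "x0 < m"
    and min_eq: "Min ((\<lambda>x. entropy n (\<lambda>y. W y x)) ` {..<m}) = entropy n (\<lambda>y. W y x0)"
    using Min_in[of "(\<lambda>x. entropy n (\<lambda>y. W y x)) ` {..<m}"] by fastforce
  have min: "\<And>x. x < m \<Longrightarrow> entropy n (\<lambda>y. W y x0) \<le> entropy n (\<lambda>y. W y x)"
    using min_eq[symmetric] by (auto intro: Min_le)
  show ?thesis
    unfolding min_eq
    using monotone_additive_eq_min_entropy[OF mono additive norm chan x0 min]
      LIMSEQ_Suc[OF Hmin_tpow_div_tendsto[OF chan x0 min]] Hmax_eq_min_entropy[OF chan x0 min]
    by simp
qed

end
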